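(* Consider a GLM with independent $Y_i$, $i=1,\ldots,n$, having densities $f_{\theta_i}(y)=\exp\{(y\theta_i-b(\theta_i))/a+c(y,a)\}$ and canonical link $\boldsymbol{\theta}=X\boldsymbol{\beta}$, where $X$ is a deterministic $n\times p$ matrix of rank $r$ any $r$ columns of which are linearly independent, and suppose Assumption (A) holds. There exist absolute constants $\tilde c\in(0,1)$ and $C_2>0$ such that the following holds. Let $1\le p_0\le r$ and assume $\widetilde{\mathcal{B}}(p_0)\subseteq\mathcal{B}(p_0)$, where $\widetilde{\mathcal{B}}(p_0)$ is defined in the context (using $\tilde c$). Then $$\inf_{\widehat{\boldsymbol{\theta}}}\sup_{\boldsymbol{\beta}\in\mathcal{B}(p_0)}\mathbb{E}\,KL(X\boldsymbol{\beta},\widehat{\boldsymbol{\theta}})\ge\begin{cases}C_2\,\frac{\mathcal{L}}{\mathcal{U}}\,\tau[2p_0]\,p_0\ln\!\big(\frac{pe}{p_0}\big), & 1\le p_0\le r/2,\\[2pt] C_2\,\frac{\mathcal{L}}{\mathcal{U}}\,\tau[p_0]\,r, & r/2\le p_0\le r,\end{cases}$$ where the infimum is over all estimators $\widehat{\boldsymbol{\theta}}$ of $\boldsymbol{\theta}$.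
   Context: Assumption (A): $\Theta\subseteq\mathbb{R}$ is a closed interval; $b$ is twice differentiable with $\sup_{t\in\mathbb{R}}b''(t)\le\mathcal{U}$ and $\inf_{t\in\Theta}b''(t)\ge\mathcal{L}$ for constants $0<\mathcal{L}\le\mathcal{U}<\infty$; $a>0$. $KL(\boldsymbol{\theta},\boldsymbol{\zeta})=\frac1a\sum_{i=1}^n\{b'(\theta_i)(\theta_i-\zeta_i)-b(\theta_i)+b(\zeta_i)\}$. $\|\boldsymbol\beta\|_0$ is the number of nonzero entries; $\mathcal{B}(p_0)=\{\boldsymbol{\beta}\in\mathbb{R}^p:\boldsymbol{\beta}^t\mathbf{x}_i\in\Theta\ \forall i,\ \|\boldsymbol{\beta}\|_0\le p_0\}$, $\mathbf{x}_i^t$ the rows of $X$. For $k\le r$: $\phi_{\min}[k]=\min_{1\le\|\boldsymbol\beta\|_0\le k}\|X\boldsymbol\beta\|^2/\|\boldsymbol\beta\|^2$, $\phi_{\max}[k]=\max_{1\le\|\boldsymbol\beta\|_0\le k}\|X\boldsymbol\beta\|^2/\|\boldsymbol\beta\|^2$, $\tau[k]=\phi_{\min}[k]/\phi_{\max}[k]$. The set $\widetilde{\mathcal{B}}(p_0)$: if $p_0\le r/2$, it is the set of $\boldsymbol\beta\in\{0,C_{p_0}\}^p$ with exactly $p_0$ entries equal to $C_{p_0}$, where $C_{p_0}^2=\frac{1}{16}\tilde c\,\frac{a}{\mathcal U}\,\phi_{\max}[2p_0]^{-1}\ln(pe/p_0)$; if $r/2\le p_0\le r$, it is the set of $\boldsymbol\beta$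 whose first $p_0$ coordinates lie in $\{0,C_{p_0}\}$ and whose remaining coordinates are $0$, where $C_{p_0}^2=\frac{\ln 2}{64}\frac{a}{\mathcal U}\phi_{\max}[p_0]^{-1}$. *)

theory Defs
  imports "HOL-Probability.Probability"
begin

text \<open>Vectors in R^p are represented as functions nat => real vanishing from index p on;
  an n x p matrix is a function nat => nat => real used on indices i < n, j < p.\<close>

definition vecs :: "nat \<Rightarrow> (nat \<Rightarrow> real) set" where
  "vecs p = {\<beta>. \<forall>j\<ge>p. \<beta> j = 0}"

definition l0 :: "nat \<Rightarrow> (nat \<Rightarrow> real) \<Rightarrow> nat" where
  "l0 p \<beta> = card {j\<in>{..<p}. \<beta> j \<noteq> 0}"

definition matvec :: "nat \<Rightarrow> (nat \<Rightarrow> nat \<Rightarrow> real) \<Rightarrow> (nat \<Rightarrow> real) \<Rightarrow> nat \<Rightarrow> real" where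
  "matvec p X \<beta> = (\<lambda>i. \<Sum>j<p. X i j * \<beta> j)"

definition sqnorm :: "nat \<Rightarrow> (nat \<Rightarrow> real) \<Rightarrow> real" where
  "sqnorm m v = (\<Sum>i<m. (v i)^2)"

definition phi_min :: "nat \<Rightarrow> nat \<Rightarrow> (nat \<Rightarrow> nat \<Rightarrow> real) \<Rightarrow> nat \<Rightarrow> real" where
  "phi_min n p X k = Inf {sqnorm n (matvec p X \<beta>) / sqnorm p \<beta> | \<beta>.
      \<beta> \<in> vecs p \<and> 1 \<le> l0 p \<beta> \<and> l0 p \<beta> \<le> k}"

definition phi_max :: "nat \<Rightarrow> nat \<Rightarrow> (nat \<Rightarrow> nat \<Rightarrow> real) \<Rightarrow> nat \<Rightarrow> real" where
  "phi_max n p X k = Sup {sqnorm n (matvec p X \<beta>) / sqnorm p \<beta> | \<beta>.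
      \<beta> \<in> vecs p \<and> 1 \<le> l0 p \<beta> \<and> l0 p \<beta> \<le> k}"

definition tau :: "nat \<Rightarrow> nat \<Rightarrow> (nat \<Rightarrow> nat \<Rightarrow> real) \<Rightarrow> nat \<Rightarrow> real" where
  "tau n p X k = phi_min n p X k / phi_max n p X k"

definition cols_indep :: "nat \<Rightarrow> (nat \<Rightarrow> nat \<Rightarrow> real) \<Rightarrow> nat set \<Rightarrow> bool" where
  "cols_indep n X J = (\<forall>w. (\<forall>i<n. (\<Sum>j\<in>J. w j * X i j) = 0) \<longrightarrow> (\<forall>j\<in>J. w j = 0))"

definition col_rank :: "nat \<Rightarrow> nat \<Rightarrow> (nat \<Rightarrow> nat \<Rightarrow> real) \<Rightarrow> nat" where
  "col_rank n p X = Max {card J | J. J \<subseteq> {..<p} \<and> cols_indep n X J}"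

definition glm_density :: "real \<Rightarrow> (real \<Rightarrow> real) \<Rightarrow> (real \<Rightarrow> real \<Rightarrow> real) \<Rightarrow> real \<Rightarrow> real \<Rightarrow> real" where
  "glm_density a b c \<theta> y = exp ((y * \<theta> - b \<theta>) / a + c y a)"

definition KL :: "real \<Rightarrow> (real \<Rightarrow> real) \<Rightarrow> (real \<Rightarrow> real) \<Rightarrow> nat \<Rightarrow> (nat \<Rightarrow> real) \<Rightarrow> (nat \<Rightarrow> real) \<Rightarrow> real" where
  "KL a b b1 n \<theta> \<zeta> = (1 / a) * (\<Sum>i<n. b1 (\<theta> i) * (\<theta> i - \<zeta> i) - b (\<theta> i) + b (\<zeta> i))"

definition B_set :: "nat \<Rightarrow> nat \<Rightarrow> (nat \<Rightarrow> nat \<Rightarrow> real) \<Rightarrow> real set \<Rightarrow> nat \<Rightarrow> (nat \<Rightarrow> real) set" where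
  "B_set n p X \<Theta> p0 = {\<beta> \<in> vecs p. (\<forall>i<n. matvec p X \<beta> i \<in> \<Theta>) \<and> l0 p \<beta> \<le> p0}"

definition Btilde1 :: "nat \<Rightarrow> real \<Rightarrow> nat \<Rightarrow> (nat \<Rightarrow> real) set" where
  "Btilde1 p C p0 = {\<beta> \<in> vecs p. (\<forall>j<p. \<beta> j \<in> {0, C}) \<and> card {j\<in>{..<p}. \<beta> j = C} = p0}"

definition Btilde2 :: "nat \<Rightarrow> real \<Rightarrow> nat \<Rightarrow> (nat \<Rightarrow> real) set" where
  "Btilde2 p C p0 = {\<beta> \<in> vecs p. (\<forall>j<p0. \<beta> j \<in> {0, C}) \<and> (\<forall>j\<ge>p0. \<beta> j = 0)}"

definition data_dist :: "nat \<Rightarrow> nat \<Rightarrow> (nat \<Rightarrow> nat \<Rightarrow> real) \<Rightarrow> real measure \<Rightarrow> real \<Rightarrow>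
    (real \<Rightarrow> real) \<Rightarrow> (real \<Rightarrow> real \<Rightarrow> real) \<Rightarrow> (nat \<Rightarrow> real) \<Rightarrow> (nat \<Rightarrow> real) measure" where
  "data_dist n p X \<mu> a b c \<beta> =
     PiM {..<n} (\<lambda>i. density \<mu> (\<lambda>y. ennreal (glm_density a b c (matvec p X \<beta> i) y)))"

definition estimators :: "nat \<Rightarrow> ((nat \<Rightarrow> real) \<Rightarrow> (nat \<Rightarrow> real)) set" where
  "estimators n = {\<theta>h. \<forall>i<n. (\<lambda>y. \<theta>h y i) \<in> borel_measurable (PiM {..<n} (\<lambda>_. borel))}"

definition risk :: "nat \<Rightarrow> nat \<Rightarrow> (nat \<Rightarrow> nat \<Rightarrow> real) \<Rightarrow> real measure \<Rightarrow> real \<Rightarrow>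
    (real \<Rightarrow> real) \<Rightarrow> (real \<Rightarrow> real) \<Rightarrow> (real \<Rightarrow> real \<Rightarrow> real) \<Rightarrow>
    ((nat \<Rightarrow> real) \<Rightarrow> (nat \<Rightarrow> real)) \<Rightarrow> (nat \<Rightarrow> real) \<Rightarrow> ennreal" where
  "risk n p X \<mu> a b b1 c \<theta>h \<beta> =
     (\<integral>\<^sup>+ y. ennreal (KL a b b1 n (matvec p X \<beta>) (\<theta>h y)) \<partial>(data_dist n p X \<mu> a b c \<beta>))"

end

theory Submission
  imports Defs
begin

text \<open>The hypotheses are vertices \<open>\<beta>\<^sub>S = C * 1\<^sub>S\<close> of a cube. Since \<open>b'' \<le> U\<close>, the law of the data
  under \<open>\<beta>\<^sub>S\<close> has chi-square divergence at most \<open>exp (U \<parallel>X \<beta>\<^sub>S\<parallel>\<^sup>2 / a)\<close> from the law under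
  \<open>\<beta> = 0\<close>. Since \<open>b'' \<ge> L\<close> on \<open>\<Theta>\<close>, \<open>KL(X \<beta>\<^sub>S, \<theta>)\<close> dominates \<open>L / (2 a)\<close> times the squared distance from
  \<open>X \<beta>\<^sub>S\<close> to the projection of \<open>\<theta>\<close> onto \<open>\<Theta>\<close>; by the restricted eigenvalue \<open>\<phi>\<^sub>m\<^sub>i\<^sub>n\<close>, any estimate is
  KL-close only to vertices whose supports lie in one small symmetric-difference ball. Bounding
  the mass of these balls by the chi-square divergence (AM-GM) shows that some vertex has risk
  at least a constant times \<open>\<phi>\<^sub>m\<^sub>i\<^sub>n C\<^sup>2 T L / a\<close>, where \<open>T\<close> is the radius of the balls. All
  \<open>p\<^sub>0\<close>-subsets of \<open>{0..<p}\<close> (for \<open>p\<^sub>0 \<le> r/2\<close>), respectively all subsets of \<open>{0..<p\<^sub>0}\<close>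
  (for \<open>p\<^sub>0 \<ge> r/2\<close>), with \<open>C\<close> as in the definition of \<open>Btilde\<close>, give the two rates.\<close>

section \<open>Convexity of the cumulant function\<close>

lemma first_order_le_of_deriv2_nonneg:
  fixes f f' f'' :: "real \<Rightarrow> real"
  assumes f': "\<And>t. (f has_real_derivative f' t) (at t)"
    and f'': "\<And>t. (f' has_real_derivative f'' t) (at t)"
    and nonneg: "\<And>t. min x y \<le> t \<Longrightarrow> t \<le> max x y \<Longrightarrow> f'' t \<ge> 0"
  shows "f x + f' x * (y - x) \<le> f y"
proof (cases "x \<le> y")
  case True
  have "f' x \<le> f' t" if "x \<le> t" "t \<le> y" for t
    using DERIV_nonneg_imp_nondecreasing[of x t f'] that f'' nonneg True by force
  then have "f x - f' x * x \<le> f y - f' x * y"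
    using True f' by (intro DERIV_nonneg_imp_nondecreasing[of x y "\<lambda>t. f t - f' x * t"])
      (auto intro!: exI[of _ "f' _ - f' x"] derivative_eq_intros)
  then show ?thesis by (simp add: algebra_simps)
next
  case False
  have "f' t \<le> f' x" if "y \<le> t" "t \<le> x" for t
    using DERIV_nonneg_imp_nondecreasing[of t x f'] that f'' nonneg False by force
  then have "f x - f' x * x \<le> f y - f' x * y"
    using False f' by (intro DERIV_nonpos_imp_nonincreasing[of y x "\<lambda>t. f t - f' x * t"])
      (auto intro!: exI[of _ "f' _ - f' x"] derivative_eq_intros)
  then show ?thesis by (simp add: algebra_simps)
qed

lemma exp_midpoint_le: "exp ((s + t) / 2) \<le> (exp s + exp t) / (2::real)"
  using convex_onD[OF exp_convex, of "1/2" s t] by (simp add: add_divide_distrib)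

lemma glm_density_pos: "glm_density a b c \<theta> y > 0"
  by (simp add: glm_density_def)

lemma sigma_finite_of_pos_density:
  fixes g :: "'a \<Rightarrow> real"
  assumes [measurable]: "g \<in> borel_measurable M"
    and pos: "\<And>x. x \<in> space M \<Longrightarrow> g x > 0"
    and fin: "(\<integral>\<^sup>+ x. ennreal (g x) \<partial>M) \<noteq> \<infinity>"
  shows "sigma_finite_measure M"
proof
  define B where "B k = {x \<in> space M. g x > 1 / real (Suc k)}" for k
  have B_sets: "B k \<in> sets M" for k
    unfolding B_def by measurable
  have "emeasure M (B k) \<le> (\<integral>\<^sup>+ x. ennreal (real (Suc k)) * ennreal (g x) \<partial>M)" for k
  proof -
    have "indicator (B k) x \<le> ennreal (real (Suc k)) * ennreal (g x)" for x
    proof (cases "x \<in> B k")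
      case True
      then have "1 \<le> real (Suc k) * g x"
        unfolding B_def by (simp add: field_simps del: of_nat_Suc)
      with True show ?thesis
        by (simp add: ennreal_mult'[symmetric] del: of_nat_Suc)
    qed simp
    then show ?thesis
      using B_sets by (simp add: nn_integral_mono flip: nn_integral_indicator)
  qed
  also have "(\<integral>\<^sup>+ x. ennreal (real (Suc k)) * ennreal (g x) \<partial>M) < \<infinity>" for k
    using fin by (simp add: nn_integral_cmult ennreal_mult_less_top less_top)
  finally have B_fin: "emeasure M (B k) \<noteq> \<infinity>" for k
    by (auto simp: top.not_eq_extremum)
  have "\<exists>k. x \<in> B k" if x: "x \<in> space M" for x
  proof -
    obtain k where "inverse (real (Suc k)) < g x"
      using reals_Archimedean pos[OF x] by blast
    then show ?thesis using x by (auto simp: B_def field_simps)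
  qed
  then have "(\<Union>k. B k) = space M"
    by (auto simp: B_def)
  then show "\<exists>A. countable A \<and> A \<subseteq> sets M \<and> \<Union> A = space M \<and> (\<forall>a\<in>A. emeasure M a \<noteq> \<infinity>)"
    using B_sets B_fin by (intro exI[of _ "range B"]) auto
qed

locale glm =
  fixes \<Theta> :: "real set" and \<mu> :: "real measure" and a :: real
    and b b1 b2 :: "real \<Rightarrow> real" and c :: "real \<Rightarrow> real \<Rightarrow> real" and L U :: real
  assumes sets_mu: "sets \<mu> = sets borel"
    and c_measurable: "(\<lambda>y. c y a) \<in> borel_measurable borel"
    and prob_space_density: "\<And>\<theta>. prob_space (density \<mu> (\<lambda>y. ennreal (glm_density a b c \<theta> y)))"
    and interval_Theta: "is_interval \<Theta>" and closed_Theta: "closed \<Theta>"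
    and b_deriv: "\<And>t. (b has_real_derivative b1 t) (at t)"
    and b1_deriv: "\<And>t. (b1 has_real_derivative b2 t) (at t)"
    and b2_le_U: "\<And>t. b2 t \<le> U" and L_le_b2: "\<And>t. t \<in> \<Theta> \<Longrightarrow> L \<le> b2 t"
    and L_pos: "0 < L" and L_le_U: "L \<le> U" and a_pos: "0 < a"
begin

abbreviation f :: "real \<Rightarrow> real \<Rightarrow> real" where "f \<theta> y \<equiv> glm_density a b c \<theta> y"

lemma space_mu: "space \<mu> = UNIV"
  using sets_eq_imp_space_eq[OF sets_mu] by simp

lemma density_borel_measurable[measurable]: "(\<lambda>y. f \<theta> y) \<in> borel_measurable borel"
  unfolding glm_density_def using c_measurable by measurable

lemma density_measurable[measurable]: "(\<lambda>y. f \<theta> y) \<in> borel_measurable \<mu>"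
  using density_borel_measurable measurable_cong_sets[OF sets_mu refl] by blast

lemma nn_integral_density_eq_1: "(\<integral>\<^sup>+ y. ennreal (f \<theta> y) \<partial>\<mu>) = 1"
proof -
  interpret prob_space "density \<mu> (\<lambda>y. ennreal (f \<theta> y))"
    by (rule prob_space_density)
  have "1 = emeasure (density \<mu> (\<lambda>y. ennreal (f \<theta> y))) (space \<mu>)"
    using emeasure_space_1 by simp
  also have "\<dots> = (\<integral>\<^sup>+ y. ennreal (f \<theta> y) * indicator (space \<mu>) y \<partial>\<mu>)"
    by (rule emeasure_density) auto
  finally show ?thesis
    by (simp add: space_mu)
qed

lemma sigma_finite_mu: "sigma_finite_measure \<mu>"
  by (rule sigma_finite_of_pos_density[of "f 0"]) (simp_all add: glm_density_pos nn_integral_density_eq_1)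

text \<open>As a log-partition function \<open>b\<close> is convex: integrating the pointwise midpoint convexity
  of \<open>exp\<close>, \<open>f ((s + t) / 2) y * K \<le> (f s y + f t y) / 2\<close>, gives \<open>K \<le> 1\<close>.\<close>

lemma b_midpoint_convex: "b ((s + t) / 2) \<le> (b s + b t) / 2"
proof -
  define K where "K = exp ((b ((s + t) / 2) - (b s + b t) / 2) / a)"
  have pointwise: "f ((s + t) / 2) y * K \<le> f s y / 2 + f t y / 2" for y
  proof -
    have "f ((s + t) / 2) y * K = exp ((((y * s - b s) / a + c y a) + ((y * t - b t) / a + c y a)) / 2)"
      unfolding glm_density_def K_def exp_add[symmetric]
      by (rule arg_cong[where f=exp]) (use a_pos in \<open>simp add: field_simps\<close>)
    also have "\<dots> \<le> (f s y + f t y) / 2"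
      unfolding glm_density_def by (rule exp_midpoint_le)
    finally show ?thesis by simp
  qed
  have "ennreal K = (\<integral>\<^sup>+ y. ennreal (f ((s + t) / 2) y * K) \<partial>\<mu>)"
    by (simp add: ennreal_mult'' K_def nn_integral_multc nn_integral_density_eq_1)
  also have "\<dots> \<le> (\<integral>\<^sup>+ y. ennreal (f s y) / 2 + ennreal (f t y) / 2 \<partial>\<mu>)"
    using pointwise by (intro nn_integral_mono)
      (simp add: ennreal_divide_numeral glm_density_pos less_imp_le flip: ennreal_plus)
  also have "\<dots> = ennreal 1"
    by (simp add: nn_integral_add nn_integral_divide nn_integral_density_eq_1 ennreal_divide_numeral
        flip: add_divide_distrib_ennreal)
  finally have "K \<le> 1"
    by (simp add: K_def)
  then show ?thesis
    using a_pos by (simp add: K_def divide_le_0_iff)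
qed

text \<open>If \<open>b2 t < 0\<close>, then \<open>b1\<close> is strictly decreasing near \<open>t\<close> and, by the mean value theorem,
  \<open>b\<close> violates midpoint convexity on a small interval around \<open>t\<close>.\<close>

lemma b2_nonneg: "b2 t \<ge> 0"
proof (rule ccontr)
  assume "\<not> b2 t \<ge> 0"
  then have neg: "b2 t < 0" by simp
  obtain d1 where d1: "d1 > 0" "\<And>h. 0 < h \<Longrightarrow> h < d1 \<Longrightarrow> b1 t < b1 (t - h)"
    using DERIV_neg_dec_left[OF b1_deriv neg] by blast
  obtain d2 where d2: "d2 > 0" "\<And>h. 0 < h \<Longrightarrow> h < d2 \<Longrightarrow> b1 (t + h) < b1 t"
    using DERIV_neg_dec_right[OF b1_deriv neg] by blast
  define h where "h = min d1 d2 / 2"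
  have h: "h > 0" "h < d1" "h < d2"
    using d1 d2 by (auto simp: h_def)
  obtain z where z: "t < z" "z < t + h" "b (t + h) - b t = h * b1 z"
    using MVT2[of t "t + h" b b1] h b_deriv by auto
  obtain z' where z': "t - h < z'" "z' < t" "b t - b (t - h) = h * b1 z'"
    using MVT2[of "t - h" t b b1] h b_deriv by auto
  have "b1 z < b1 z'"
    using d2(2)[of "z - t"] d1(2)[of "t - z'"] z z' h by auto
  then have "b (t + h) + b (t - h) < 2 * b t"
    using z(3) z'(3) h(1) mult_strict_left_mono[of "b1 z" "b1 z'" h] by linarith
  moreover have "b t \<le> (b (t + h) + b (t - h)) / 2"
    using b_midpoint_convex[of "t + h" "t - h"] by simp
  ultimately show False by simp
qed

lemma b1_mono: "x \<le> y \<Longrightarrow> b1 x \<le> b1 y"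
  using DERIV_nonneg_imp_nondecreasing[of x y b1] b1_deriv b2_nonneg by blast

definition bregman :: "real \<Rightarrow> real \<Rightarrow> real" where
  "bregman x y = b y - b x - b1 x * (y - x)"

lemma KL_eq_sum_bregman: "KL a b b1 n \<theta> \<zeta> = (\<Sum>i<n. bregman (\<theta> i) (\<zeta> i)) / a"
  unfolding KL_def bregman_def by (simp add: algebra_simps)

lemma bregman_nonneg: "bregman x y \<ge> 0"
  using first_order_le_of_deriv2_nonneg[OF b_deriv b1_deriv b2_nonneg, of x y]
  unfolding bregman_def by linarith

lemma bregman_le: "bregman x y \<le> U / 2 * (y - x)\<^sup>2"
proof -
  have "U / 2 * x\<^sup>2 - b x + (U * x - b1 x) * (y - x) \<le> U / 2 * y\<^sup>2 - b y"
    using b_deriv b1_deriv b2_le_U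
    by (intro first_order_le_of_deriv2_nonneg[where f'' = "\<lambda>t. U - b2 t"])
      (auto intro!: derivative_eq_intros)
  then show ?thesis
    by (simp add: bregman_def power2_eq_square algebra_simps)
qed

lemma segment_subset_Theta:
  assumes "x \<in> \<Theta>" "y \<in> \<Theta>" "min x y \<le> t" "t \<le> max x y"
  shows "t \<in> \<Theta>"
  using assms mem_is_interval_1_I[OF interval_Theta, of x y t] mem_is_interval_1_I[OF interval_Theta, of y x t]
  by (cases "x \<le> y") (auto simp: min_def max_def)

lemma bregman_ge:
  assumes "x \<in> \<Theta>" "y \<in> \<Theta>"
  shows "L / 2 * (y - x)\<^sup>2 \<le> bregman x y"
proof -
  have "b x - L / 2 * x\<^sup>2 + (b1 x - L * x) * (y - x) \<le> b y - L / 2 * y\<^sup>2"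
    using b_deriv b1_deriv L_le_b2 segment_subset_Theta[OF assms]
    by (intro first_order_le_of_deriv2_nonneg[where f'' = "\<lambda>t. b2 t - L"])
      (auto intro!: derivative_eq_intros)
  then show ?thesis
    by (simp add: bregman_def power2_eq_square algebra_simps)
qed

text \<open>Projecting the second argument onto \<open>\<Theta>\<close> only decreases the Bregman divergence: the
  projection \<open>z\<close> lies between \<open>x\<close> and \<open>y\<close>, and \<open>b1\<close> is monotone.\<close>

lemma bregman_ge_closest_point:
  assumes x: "x \<in> \<Theta>"
  shows "L / 2 * (closest_point \<Theta> y - x)\<^sup>2 \<le> bregman x y"
proof -
  define z where "z = closest_point \<Theta> y"
  have ne: "\<Theta> \<noteq> {}" using x by auto
  have z: "z \<in> \<Theta>"
    unfolding z_def by (rule closest_point_in_set[OF closed_Theta ne])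
  have z_closest: "dist y z \<le> dist y w" if "w \<in> \<Theta>" for w
    unfolding z_def using closest_point_exists(2)[OF closed_Theta ne] that by blast
  have between: "(x \<le> z \<and> z \<le> y) \<or> (y \<le> z \<and> z \<le> x)"
  proof (cases "min x z \<le> y \<and> y \<le> max x z")
    case True
    then have "y \<in> \<Theta>" using segment_subset_Theta[OF x z] by blast
    then have "z = y" using z_closest[of y] by simp
    then show ?thesis by auto
  next
    case False
    then show ?thesis
      using z_closest[OF x] unfolding dist_real_def min_def max_def by (smt (verit))
  qed
  have "(b1 z - b1 x) * (y - z) \<ge> 0"
    using between b1_mono[of x z] b1_mono[of z x] by (auto intro: mult_nonneg_nonneg mult_nonpos_nonpos)
  then have "bregman x z \<le> bregman x y"
    using bregman_nonneg[of z y] by (simp add: bregman_def algebra_simps)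
  then show ?thesis
    using bregman_ge[OF x z] by (simp add: z_def)
qed

lemma KL_ge_closest_point:
  assumes "\<And>i. i < n \<Longrightarrow> \<theta> i \<in> \<Theta>"
  shows "L / (2 * a) * (\<Sum>i<n. (closest_point \<Theta> (\<zeta> i) - \<theta> i)\<^sup>2) \<le> KL a b b1 n \<theta> \<zeta>"
proof -
  have "L / 2 * (\<Sum>i<n. (closest_point \<Theta> (\<zeta> i) - \<theta> i)\<^sup>2) \<le> (\<Sum>i<n. bregman (\<theta> i) (\<zeta> i))"
    unfolding sum_distrib_left using assms by (intro sum_mono bregman_ge_closest_point) auto
  then have "L / 2 * (\<Sum>i<n. (closest_point \<Theta> (\<zeta> i) - \<theta> i)\<^sup>2) / a \<le> KL a b b1 n \<theta> \<zeta>"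
    unfolding KL_eq_sum_bregman using a_pos by (intro divide_right_mono) auto
  then show ?thesis
    by simp
qed

end

section \<open>Restricted eigenvalues and cube vertices\<close>

lemma sqnorm_nonneg: "sqnorm m v \<ge> 0"
  unfolding sqnorm_def by (simp add: sum_nonneg)

definition sparse_ratios :: "nat \<Rightarrow> nat \<Rightarrow> (nat \<Rightarrow> nat \<Rightarrow> real) \<Rightarrow> nat \<Rightarrow> real set" where
  "sparse_ratios n p X k = {sqnorm n (matvec p X \<beta>) / sqnorm p \<beta> | \<beta>.
      \<beta> \<in> vecs p \<and> 1 \<le> l0 p \<beta> \<and> l0 p \<beta> \<le> k}"

lemma phi_min_eq_Inf: "phi_min n p X k = Inf (sparse_ratios n p X k)"
  unfolding phi_min_def sparse_ratios_def ..

lemma phi_max_eq_Sup: "phi_max n p X k = Sup (sparse_ratios n p X k)"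
  unfolding phi_max_def sparse_ratios_def ..

lemma sqnorm_matvec_le: "sqnorm n (matvec p X \<beta>) \<le> (\<Sum>i<n. \<Sum>j<p. (X i j)\<^sup>2) * sqnorm p \<beta>"
proof -
  have "sqnorm n (matvec p X \<beta>) = (\<Sum>i<n. (\<Sum>j<p. X i j * \<beta> j)\<^sup>2)"
    unfolding sqnorm_def matvec_def ..
  also have "\<dots> \<le> (\<Sum>i<n. (\<Sum>j<p. (X i j)\<^sup>2) * (\<Sum>j<p. (\<beta> j)\<^sup>2))"
    by (intro sum_mono Cauchy_Schwarz_ineq_sum)
  finally show ?thesis
    by (simp add: sqnorm_def sum_distrib_right)
qed

lemma sqnorm_pos_of_l0:
  assumes "1 \<le> l0 p \<beta>"
  shows "sqnorm p \<beta> > 0"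
proof -
  have "{j\<in>{..<p}. \<beta> j \<noteq> 0} \<noteq> {}"
    using assms unfolding l0_def by (metis card.empty not_one_le_zero)
  then obtain j where j: "j < p" "\<beta> j \<noteq> 0" by auto
  then have "0 < (\<beta> j)\<^sup>2" by simp
  also have "\<dots> \<le> sqnorm p \<beta>"
    unfolding sqnorm_def using j by (intro member_le_sum) auto
  finally show ?thesis .
qed

lemma l0_eq_0_imp_sqnorm_eq_0:
  assumes "l0 p \<beta> = 0"
  shows "sqnorm p \<beta> = 0" "sqnorm n (matvec p X \<beta>) = 0"
proof -
  have "\<beta> j = 0" if "j < p" for j
    using assms that unfolding l0_def by auto
  then show "sqnorm p \<beta> = 0" "sqnorm n (matvec p X \<beta>) = 0"
    by (simp_all add: sqnorm_def matvec_def)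
qed

lemma sparse_ratios_bdd_above: "bdd_above (sparse_ratios n p X k)"
proof
  fix x assume "x \<in> sparse_ratios n p X k"
  then obtain \<beta> where x: "x = sqnorm n (matvec p X \<beta>) / sqnorm p \<beta>" "1 \<le> l0 p \<beta>"
    unfolding sparse_ratios_def by auto
  then show "x \<le> (\<Sum>i<n. \<Sum>j<p. (X i j)\<^sup>2)"
    using sqnorm_pos_of_l0 sqnorm_matvec_le[of n p X \<beta>] by (simp add: divide_le_eq)
qed

lemma sparse_ratios_nonneg: "x \<in> sparse_ratios n p X k \<Longrightarrow> x \<ge> 0"
  by (auto simp: sparse_ratios_def sqnorm_nonneg)

lemma sparse_ratios_nonempty:
  assumes "1 \<le> p" "1 \<le> k"
  shows "sparse_ratios n p X k \<noteq> {}"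
proof -
  define \<beta> where "\<beta> = (\<lambda>j::nat. if j = 0 then (1::real) else 0)"
  have "{j\<in>{..<p}. \<beta> j \<noteq> 0} = {0}"
    using assms by (auto simp: \<beta>_def)
  then have "\<beta> \<in> vecs p \<and> 1 \<le> l0 p \<beta> \<and> l0 p \<beta> \<le> k"
    using assms by (auto simp: l0_def vecs_def \<beta>_def)
  then show ?thesis
    unfolding sparse_ratios_def by blast
qed

lemma sqnorm_matvec_le_phi_max:
  assumes "\<beta> \<in> vecs p" "l0 p \<beta> \<le> k"
  shows "sqnorm n (matvec p X \<beta>) \<le> phi_max n p X k * sqnorm p \<beta>"
proof (cases "l0 p \<beta> = 0")
  case True
  then show ?thesis using l0_eq_0_imp_sqnorm_eq_0 by simp
next
  case False
  then have "sqnorm n (matvec p X \<beta>) / sqnorm p \<beta> \<in> sparse_ratios n p X k"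
    unfolding sparse_ratios_def using assms by auto
  then have "sqnorm n (matvec p X \<beta>) / sqnorm p \<beta> \<le> phi_max n p X k"
    unfolding phi_max_eq_Sup by (rule cSup_upper[OF _ sparse_ratios_bdd_above])
  then show ?thesis
    using False sqnorm_pos_of_l0 by (simp add: divide_le_eq)
qed

lemma phi_min_le_sqnorm_matvec:
  assumes "\<beta> \<in> vecs p" "l0 p \<beta> \<le> k"
  shows "phi_min n p X k * sqnorm p \<beta> \<le> sqnorm n (matvec p X \<beta>)"
proof (cases "l0 p \<beta> = 0")
  case True
  then show ?thesis using l0_eq_0_imp_sqnorm_eq_0 by simp
next
  case False
  then have "sqnorm n (matvec p X \<beta>) / sqnorm p \<beta> \<in> sparse_ratios n p X k"
    unfolding sparse_ratios_def using assms by auto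
  then have "phi_min n p X k \<le> sqnorm n (matvec p X \<beta>) / sqnorm p \<beta>"
    unfolding phi_min_eq_Inf by (rule cInf_lower) (auto intro: bdd_belowI sparse_ratios_nonneg)
  then show ?thesis
    using False sqnorm_pos_of_l0 by (simp add: le_divide_eq)
qed

lemma phi_pos_of_tau_pos:
  assumes "1 \<le> p" "1 \<le> k" "tau n p X k > 0"
  shows "phi_min n p X k > 0" "phi_max n p X k > 0"
proof -
  have ne: "sparse_ratios n p X k \<noteq> {}"
    using sparse_ratios_nonempty[OF assms(1,2)] .
  have "phi_min n p X k \<ge> 0"
    unfolding phi_min_eq_Inf using ne by (intro cInf_greatest sparse_ratios_nonneg)
  moreover have "phi_max n p X k \<ge> 0"
  proof -
    obtain x where x: "x \<in> sparse_ratios n p X k"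
      using ne by blast
    then have "x \<le> phi_max n p X k"
      unfolding phi_max_eq_Sup by (rule cSup_upper[OF _ sparse_ratios_bdd_above])
    then show ?thesis
      using sparse_ratios_nonneg[OF x] by linarith
  qed
  ultimately show "phi_min n p X k > 0" "phi_max n p X k > 0"
    using assms(3) by (auto simp: tau_def zero_less_divide_iff)
qed

lemma matvec_diff: "matvec p X (\<lambda>j. u j - v j) i = matvec p X u i - matvec p X v i"
  unfolding matvec_def by (simp add: algebra_simps sum_subtractf)

lemma col_rank_le: "col_rank n p X \<le> p"
proof -
  let ?A = "{card J | J. J \<subseteq> {..<p} \<and> cols_indep n X J}"
  have "?A \<subseteq> {..p}"
  proof
    fix m assume "m \<in> ?A"
    then obtain J where "m = card J" "J \<subseteq> {..<p}" by auto
    then show "m \<in> {..p}"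
      using card_mono[of "{..<p}" J] by simp
  qed
  moreover have "0 \<in> ?A"
    by (auto simp: cols_indep_def intro!: exI[of _ "{}"])
  ultimately show ?thesis
    unfolding col_rank_def by (subst Max_le_iff) (auto intro: finite_subset)
qed

definition cube_vertex :: "real \<Rightarrow> nat set \<Rightarrow> nat \<Rightarrow> real" where
  "cube_vertex C S j = (if j \<in> S then C else 0)"

lemma sum_if_mem:
  fixes p :: nat and x :: real
  assumes "D \<subseteq> {..<p}"
  shows "(\<Sum>j<p. if j \<in> D then x else 0) = x * real (card D)"
proof -
  have "(\<Sum>j<p. if j \<in> D then x else 0) = (\<Sum>j\<in>{..<p} \<inter> D. x)"
    by (rule sum.inter_restrict[symmetric]) simp
  also have "{..<p} \<inter> D = D"
    using assms by auto
  finally show ?thesis by simp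
qed

lemma cube_vertex_in_vecs: "S \<subseteq> {..<p} \<Longrightarrow> cube_vertex C S \<in> vecs p"
  by (auto simp: vecs_def cube_vertex_def)

lemma sqnorm_cube_vertex:
  assumes "S \<subseteq> {..<p}"
  shows "sqnorm p (cube_vertex C S) = C\<^sup>2 * card S"
proof -
  have "sqnorm p (cube_vertex C S) = (\<Sum>j<p. if j \<in> S then C\<^sup>2 else 0)"
    unfolding sqnorm_def cube_vertex_def by (intro sum.cong) auto
  also have "\<dots> = C\<^sup>2 * card S"
    using assms by (rule sum_if_mem)
  finally show ?thesis .
qed

lemma cube_vertex_diff_in_vecs:
  "S \<subseteq> {..<p} \<Longrightarrow> S' \<subseteq> {..<p} \<Longrightarrow> (\<lambda>j. cube_vertex C S j - cube_vertex C S' j) \<in> vecs p"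
  by (auto simp: vecs_def cube_vertex_def)

lemma l0_cube_vertex_diff:
  assumes "S \<subseteq> {..<p}" "S' \<subseteq> {..<p}" "C \<noteq> 0"
  shows "l0 p (\<lambda>j. cube_vertex C S j - cube_vertex C S' j) = card (sym_diff S S')"
proof -
  have "{j\<in>{..<p}. cube_vertex C S j - cube_vertex C S' j \<noteq> 0} = sym_diff S S'"
    using assms by (auto simp: cube_vertex_def)
  then show ?thesis by (simp add: l0_def)
qed

lemma sqnorm_cube_vertex_diff:
  assumes "S \<subseteq> {..<p}" "S' \<subseteq> {..<p}"
  shows "sqnorm p (\<lambda>j. cube_vertex C S j - cube_vertex C S' j) = C\<^sup>2 * card (sym_diff S S')"
proof -
  have "sqnorm p (\<lambda>j. cube_vertex C S j - cube_vertex C S' j) = (\<Sum>j<p. if j \<in> sym_diff S S' then C\<^sup>2 else 0)"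
    unfolding sqnorm_def cube_vertex_def by (intro sum.cong) auto
  also have "\<dots> = C\<^sup>2 * card (sym_diff S S')"
    using assms by (intro sum_if_mem) auto
  finally show ?thesis .
qed

lemma l0_cube_vertex_le:
  assumes "S \<subseteq> {..<p}"
  shows "l0 p (cube_vertex C S) \<le> card S"
  unfolding l0_def using assms finite_subset[OF assms]
  by (intro card_mono) (auto simp: cube_vertex_def split: if_splits)

lemma sqnorm_matvec_cube_vertex_le:
  assumes "S \<subseteq> {..<p}" "card S \<le> m" "m \<le> k" "phi_max n p X k \<ge> 0"
  shows "sqnorm n (matvec p X (cube_vertex C S)) \<le> phi_max n p X k * C\<^sup>2 * m"
proof -
  have "sqnorm n (matvec p X (cube_vertex C S)) \<le> phi_max n p X k * (C\<^sup>2 * card S)"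
    using assms l0_cube_vertex_le[OF assms(1), of C]
    by (subst sqnorm_cube_vertex[OF assms(1), symmetric])
      (intro sqnorm_matvec_le_phi_max cube_vertex_in_vecs, auto)
  also have "\<dots> \<le> phi_max n p X k * (C\<^sup>2 * m)"
    using assms by (intro mult_left_mono) auto
  finally show ?thesis
    by (simp add: mult.assoc)
qed

lemma cube_vertex_in_Btilde1:
  assumes "S \<subseteq> {..<p}" "card S = p0" "C \<noteq> 0"
  shows "cube_vertex C S \<in> Btilde1 p C p0"
proof -
  have "{j \<in> {..<p}. cube_vertex C S j = C} = S"
    using assms by (auto simp: cube_vertex_def)
  then show ?thesis
    using assms cube_vertex_in_vecs[OF assms(1)] by (auto simp: Btilde1_def cube_vertex_def)
qed

lemma cube_vertex_in_Btilde2: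
  assumes "S \<subseteq> {..<p0}" "p0 \<le> p"
  shows "cube_vertex C S \<in> Btilde2 p C p0"
proof -
  have "S \<subseteq> {..<p}"
    using assms by auto
  then show ?thesis
    using assms cube_vertex_in_vecs[of S p] by (auto simp: Btilde2_def cube_vertex_def)
qed

section \<open>Product densities\<close>

lemma indicator_PiE_eq_prod:
  assumes "finite I" "y \<in> extensional I"
  shows "indicator (PiE I A) y = (\<Prod>i\<in>I. indicator (A i) (y i) :: ennreal)"
proof (cases "\<forall>i\<in>I. y i \<in> A i")
  case True
  then show ?thesis using assms by (auto simp: PiE_def Pi_def)
next
  case False
  then obtain i where "i \<in> I" "y i \<notin> A i" by auto
  then have "y \<notin> PiE I A" "(\<Prod>i\<in>I. indicator (A i) (y i) :: ennreal) = 0"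
    using assms(1) by (auto intro!: prod_zero bexI[of _ i])
  then show ?thesis by simp
qed

definition joint_density :: "real \<Rightarrow> (real \<Rightarrow> real) \<Rightarrow> (real \<Rightarrow> real \<Rightarrow> real) \<Rightarrow> nat \<Rightarrow>
    (nat \<Rightarrow> real) \<Rightarrow> (nat \<Rightarrow> real) \<Rightarrow> real" where
  "joint_density a b c n \<theta> y = (\<Prod>i<n. glm_density a b c (\<theta> i) (y i))"

context glm
begin

abbreviation F :: "nat \<Rightarrow> (nat \<Rightarrow> real) \<Rightarrow> (nat \<Rightarrow> real) \<Rightarrow> real" where
  "F n \<theta> y \<equiv> joint_density a b c n \<theta> y"

lemma joint_density_pos: "F n \<theta> y > 0"
  unfolding joint_density_def by (intro prod_pos) (simp add: glm_density_pos)

lemma ennreal_joint_density: "ennreal (F n \<theta> y) = (\<Prod>i<n. ennreal (f (\<theta> i) (y i)))"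
  unfolding joint_density_def by (simp add: prod_ennreal glm_density_pos less_imp_le)

lemma sets_PiM_mu: "sets (PiM {..<n} (\<lambda>_. \<mu>)) = sets (PiM {..<n} (\<lambda>_. borel))"
  by (rule sets_PiM_cong) (auto simp: sets_mu)

lemma joint_density_measurable[measurable]:
  "(\<lambda>y. F n \<theta> y) \<in> borel_measurable (PiM {..<n} (\<lambda>_. \<mu>))"
  unfolding joint_density_def by measurable

lemma product_sigma_finite_mu: "product_sigma_finite (\<lambda>_::nat. \<mu>)"
  unfolding product_sigma_finite_def using sigma_finite_mu by simp

lemma data_dist_eq_density:
  "PiM {..<n} (\<lambda>i. density \<mu> (\<lambda>y. ennreal (f (\<theta> i) y)))
     = density (PiM {..<n} (\<lambda>_. \<mu>)) (\<lambda>y. ennreal (F n \<theta> y))"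
proof -
  interpret M: product_sigma_finite "\<lambda>i. density \<mu> (\<lambda>y. ennreal (f (\<theta> i) y))"
    unfolding product_sigma_finite_def
    using prob_space_density prob_space_imp_sigma_finite by blast
  interpret N: product_sigma_finite "\<lambda>_::nat. \<mu>"
    by (rule product_sigma_finite_mu)
  have "density (PiM {..<n} (\<lambda>_. \<mu>)) (\<lambda>y. ennreal (F n \<theta> y))
     = PiM {..<n} (\<lambda>i. density \<mu> (\<lambda>y. ennreal (f (\<theta> i) y)))"
  proof (rule M.PiM_eqI)
    show "sets (density (PiM {..<n} (\<lambda>_. \<mu>)) (\<lambda>y. ennreal (F n \<theta> y)))
       = sets (PiM {..<n} (\<lambda>i. density \<mu> (\<lambda>y. ennreal (f (\<theta> i) y))))"
      unfolding sets_density by (rule sets_PiM_cong) simp_all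
  next
    fix A assume "\<And>i. i \<in> {..<n} \<Longrightarrow> A i \<in> sets (density \<mu> (\<lambda>y. ennreal (f (\<theta> i) y)))"
    then have A[measurable]: "\<And>i. i \<in> {..<n} \<Longrightarrow> A i \<in> sets \<mu>" by simp
    have "emeasure (density (PiM {..<n} (\<lambda>_. \<mu>)) (\<lambda>y. ennreal (F n \<theta> y))) (PiE {..<n} A)
        = (\<integral>\<^sup>+ y. ennreal (F n \<theta> y) * indicator (PiE {..<n} A) y \<partial>PiM {..<n} (\<lambda>_. \<mu>))"
      by (rule emeasure_density) (auto intro: sets_PiM_I_finite)
    also have "\<dots> = (\<integral>\<^sup>+ y. (\<Prod>i<n. ennreal (f (\<theta> i) (y i)) * indicator (A i) (y i)) \<partial>PiM {..<n} (\<lambda>_. \<mu>))"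
    proof (intro nn_integral_cong)
      fix y assume "y \<in> space (PiM {..<n} (\<lambda>_. \<mu>))"
      then have "y \<in> extensional {..<n}"
        by (simp add: space_PiM PiE_def)
      then show "ennreal (F n \<theta> y) * indicator (PiE {..<n} A) y
          = (\<Prod>i<n. ennreal (f (\<theta> i) (y i)) * indicator (A i) (y i))"
        by (simp add: ennreal_joint_density indicator_PiE_eq_prod prod.distrib)
    qed
    also have "\<dots> = (\<Prod>i<n. \<integral>\<^sup>+ x. ennreal (f (\<theta> i) x) * indicator (A i) x \<partial>\<mu>)"
      by (rule N.product_nn_integral_prod) auto
    also have "\<dots> = (\<Prod>i<n. emeasure (density \<mu> (\<lambda>y. ennreal (f (\<theta> i) y))) (A i))"
      by (intro prod.cong refl emeasure_density[symmetric]) auto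
    finally show "emeasure (density (PiM {..<n} (\<lambda>_. \<mu>)) (\<lambda>y. ennreal (F n \<theta> y))) (PiE {..<n} A)
        = (\<Prod>i<n. emeasure (density \<mu> (\<lambda>y. ennreal (f (\<theta> i) y))) (A i))" .
  qed simp
  then show ?thesis by simp
qed

lemma nn_integral_joint_density_eq_1: "(\<integral>\<^sup>+ y. ennreal (F n \<theta> y) \<partial>PiM {..<n} (\<lambda>_. \<mu>)) = 1"
proof -
  interpret N: product_sigma_finite "\<lambda>_::nat. \<mu>"
    by (rule product_sigma_finite_mu)
  have "(\<integral>\<^sup>+ y. ennreal (F n \<theta> y) \<partial>PiM {..<n} (\<lambda>_. \<mu>)) = (\<Prod>i<n. \<integral>\<^sup>+ x. ennreal (f (\<theta> i) x) \<partial>\<mu>)"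
    unfolding ennreal_joint_density by (rule N.product_nn_integral_prod) auto
  then show ?thesis
    by (simp add: nn_integral_density_eq_1)
qed

text \<open>The chi-square integral factorises, and each factor is computed exactly because
  \<open>f t y\<^sup>2 / f 0 y\<close> is again a multiple of a density.\<close>

lemma density_sq_div: "f t y ^ 2 / f 0 y = f (2 * t) y * exp ((b (2 * t) - 2 * b t + b 0) / a)"
  unfolding glm_density_def
  by (simp add: power2_eq_square exp_add[symmetric] exp_diff[symmetric])
    (use a_pos in \<open>simp add: field_simps\<close>)

lemma b_second_difference_le: "b (2 * t) - 2 * b t + b 0 \<le> U * t\<^sup>2"
  using bregman_le[of t "2 * t"] bregman_le[of t 0]
  by (simp add: bregman_def power2_eq_square algebra_simps)

lemma chi2_joint_density_le:
  "(\<integral>\<^sup>+ y. ennreal (F n \<theta> y ^ 2 / F n (\<lambda>_. 0) y) \<partial>PiM {..<n} (\<lambda>_. \<mu>))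
     \<le> ennreal (exp (U / a * sqnorm n \<theta>))"
proof -
  interpret N: product_sigma_finite "\<lambda>_::nat. \<mu>"
    by (rule product_sigma_finite_mu)
  define e where "e i = exp ((b (2 * \<theta> i) - 2 * b (\<theta> i) + b 0) / a)" for i
  have "(\<integral>\<^sup>+ y. ennreal (F n \<theta> y ^ 2 / F n (\<lambda>_. 0) y) \<partial>PiM {..<n} (\<lambda>_. \<mu>))
      = (\<integral>\<^sup>+ y. (\<Prod>i<n. ennreal (f (\<theta> i) (y i) ^ 2 / f 0 (y i))) \<partial>PiM {..<n} (\<lambda>_. \<mu>))"
    unfolding joint_density_def
    by (simp add: prod_power_distrib prod_dividef prod_ennreal glm_density_pos less_imp_le)
  also have "\<dots> = (\<Prod>i<n. \<integral>\<^sup>+ x. ennreal (f (\<theta> i) x ^ 2 / f 0 x) \<partial>\<mu>)"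
    by (rule N.product_nn_integral_prod) auto
  also have "\<dots> = (\<Prod>i<n. \<integral>\<^sup>+ x. ennreal (f (2 * \<theta> i) x) * ennreal (e i) \<partial>\<mu>)"
    by (simp add: density_sq_div e_def ennreal_mult glm_density_pos less_imp_le)
  also have "\<dots> = ennreal (\<Prod>i<n. e i)"
    by (simp add: nn_integral_multc nn_integral_density_eq_1 e_def prod_ennreal)
  also have "(\<Prod>i<n. e i) \<le> exp (U / a * sqnorm n \<theta>)"
  proof -
    have "(\<Prod>i<n. e i) = exp (\<Sum>i<n. (b (2 * \<theta> i) - 2 * b (\<theta> i) + b 0) / a)"
      by (simp add: e_def exp_sum)
    also have "\<dots> \<le> exp (\<Sum>i<n. U / a * (\<theta> i)\<^sup>2)"
      using b_second_difference_le a_pos by (auto intro!: sum_mono divide_right_mono)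
    finally show ?thesis
      by (simp add: sqnorm_def sum_distrib_left)
  qed
  finally show ?thesis
    by (simp add: ennreal_leI)
qed

end

section \<open>A chi-square lower bound for many hypotheses\<close>

lemma amgm_le: 
  fixes u v t :: real
  assumes "u \<ge> 0" "v > 0" "t > 0"
  shows "u \<le> t / 2 * (u\<^sup>2 / v) + 1 / (2 * t) * v"
proof -
  have "2 * t * u * v \<le> t\<^sup>2 * u\<^sup>2 + v\<^sup>2"
    using sum_squares_bound[of "t * u" v] by (simp add: power2_eq_square algebra_simps)
  then show ?thesis
    using assms by (simp add: field_simps power2_eq_square)
qed

lemma sqrt_balance:
  fixes P Q :: real
  assumes "P > 0" "Q > 0"
  shows "P * (sqrt (Q / P) / 2) + 1 / (2 * sqrt (Q / P)) * Q = sqrt (P * Q)"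
proof -
  define s where "s = sqrt (Q / P)"
  have s: "s > 0" "s\<^sup>2 = Q / P"
    using assms by (simp_all add: s_def)
  then have Q: "Q = P * s\<^sup>2"
    using assms by simp
  have "(P * s)\<^sup>2 = P * Q"
    unfolding Q by (simp add: power2_eq_square)
  then have "P * s = sqrt (P * Q)"
    using assms s by (intro real_sqrt_unique[symmetric]) auto
  moreover have "P * (s / 2) + 1 / (2 * s) * Q = P * s"
    unfolding Q using s by (simp add: power2_eq_square field_simps)
  ultimately show ?thesis
    by (simp add: s_def)
qed

text \<open>Pointwise AM-GM: \<open>f \<le> t/2 * f\<^sup>2/g + g/(2t)\<close>.\<close>

lemma nn_integral_indicator_le_chi2:
  fixes f g :: "'x \<Rightarrow> real"
  assumes [measurable]: "f \<in> borel_measurable \<nu>" "g \<in> borel_measurable \<nu>" "A \<in> sets \<nu>"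
    and f_nonneg: "\<And>x. x \<in> space \<nu> \<Longrightarrow> f x \<ge> 0"
    and g_pos: "\<And>x. x \<in> space \<nu> \<Longrightarrow> g x > 0"
    and chi2: "(\<integral>\<^sup>+ x. ennreal (f x ^ 2 / g x) \<partial>\<nu>) \<le> ennreal E"
    and t: "t > 0" "E \<ge> 0"
  shows "(\<integral>\<^sup>+ x. ennreal (f x) * indicator A x \<partial>\<nu>)
    \<le> ennreal (t / 2 * E) + ennreal (1 / (2 * t)) * (\<integral>\<^sup>+ x. ennreal (g x) * indicator A x \<partial>\<nu>)"
proof -
  have "(\<integral>\<^sup>+ x. ennreal (f x) * indicator A x \<partial>\<nu>)
      \<le> (\<integral>\<^sup>+ x. ennreal (t / 2) * ennreal (f x ^ 2 / g x)
                + ennreal (1 / (2 * t)) * (ennreal (g x) * indicator A x) \<partial>\<nu>)"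
  proof (intro nn_integral_mono)
    fix x assume x: "x \<in> space \<nu>"
    have "f x \<le> t / 2 * (f x ^ 2 / g x) + 1 / (2 * t) * g x"
      using amgm_le f_nonneg[OF x] g_pos[OF x] t by blast
    then have "ennreal (f x) \<le> ennreal (t / 2 * (f x ^ 2 / g x) + 1 / (2 * t) * g x)"
      by (rule ennreal_leI)
    also have "\<dots> = ennreal (t / 2) * ennreal (f x ^ 2 / g x) + ennreal (1 / (2 * t)) * ennreal (g x)"
    proof -
      have "0 \<le> t / 2" "0 \<le> f x ^ 2 / g x" "0 \<le> 1 / (2 * t)" "0 \<le> g x"
        using t g_pos[OF x] by auto
      then show ?thesis
        by (simp only: ennreal_plus ennreal_mult mult_nonneg_nonneg)
    qed
    finally show "ennreal (f x) * indicator A x \<le> ennreal (t / 2) * ennreal (f x ^ 2 / g x)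
                + ennreal (1 / (2 * t)) * (ennreal (g x) * indicator A x)"
      by (cases "x \<in> A") auto
  qed
  also have "\<dots> = ennreal (t / 2) * (\<integral>\<^sup>+ x. ennreal (f x ^ 2 / g x) \<partial>\<nu>)
                + ennreal (1 / (2 * t)) * (\<integral>\<^sup>+ x. ennreal (g x) * indicator A x \<partial>\<nu>)"
    by (simp add: nn_integral_add nn_integral_cmult)
  also have "\<dots> \<le> ennreal (t / 2) * ennreal E
                + ennreal (1 / (2 * t)) * (\<integral>\<^sup>+ x. ennreal (g x) * indicator A x \<partial>\<nu>)"
    by (intro add_mono mult_left_mono chi2) auto
  also have "ennreal (t / 2) * ennreal E = ennreal (t / 2 * E)"
    by (rule ennreal_mult[symmetric]) (use t in auto)
  finally show ?thesis .
qed

lemma sum_nn_integral_indicator_le: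
  fixes g :: "'x \<Rightarrow> real"
  assumes H: "finite H"
    and [measurable]: "g \<in> borel_measurable \<nu>" "\<And>S. S \<in> H \<Longrightarrow> A S \<in> sets \<nu>"
    and g_int: "(\<integral>\<^sup>+ x. ennreal (g x) \<partial>\<nu>) = 1"
    and overlap: "\<And>x. x \<in> space \<nu> \<Longrightarrow> real (card {S \<in> H. x \<in> A S}) \<le> N"
  shows "(\<Sum>S\<in>H. \<integral>\<^sup>+ x. ennreal (g x) * indicator (A S) x \<partial>\<nu>) \<le> ennreal N"
proof -
  have "(\<Sum>S\<in>H. \<integral>\<^sup>+ x. ennreal (g x) * indicator (A S) x \<partial>\<nu>)
      = (\<integral>\<^sup>+ x. ennreal (g x) * (\<Sum>S\<in>H. indicator (A S) x) \<partial>\<nu>)"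
    by (simp add: nn_integral_sum[symmetric] sum_distrib_left)
  also have "\<dots> \<le> (\<integral>\<^sup>+ x. ennreal (g x) * ennreal N \<partial>\<nu>)"
  proof (intro nn_integral_mono mult_left_mono)
    fix x assume x: "x \<in> space \<nu>"
    have "(\<Sum>S\<in>H. indicator (A S) x :: ennreal) = of_nat (card {S \<in> H. x \<in> A S})"
      using H by (simp add: indicator_def sum.If_cases Int_def)
    then show "(\<Sum>S\<in>H. indicator (A S) x) \<le> ennreal N"
      using overlap[OF x] by (simp add: ennreal_of_nat_eq_real_of_nat ennreal_leI)
  qed simp
  also have "\<dots> = ennreal N"
    by (simp add: nn_integral_multc g_int)
  finally show ?thesis .
qed

text \<open>The optimal \<open>t\<close> in the AM-GM step is \<open>sqrt (N / (card H * E))\<close>.\<close>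

lemma sum_nn_integral_indicator_le_sqrt:
  fixes f :: "'h \<Rightarrow> 'x \<Rightarrow> real" and g :: "'x \<Rightarrow> real" and E N :: real
  assumes H: "finite H" "H \<noteq> {}"
    and [measurable]: "\<And>S. S \<in> H \<Longrightarrow> f S \<in> borel_measurable \<nu>" "g \<in> borel_measurable \<nu>"
      "\<And>S. S \<in> H \<Longrightarrow> A S \<in> sets \<nu>"
    and f_nonneg: "\<And>S x. S \<in> H \<Longrightarrow> x \<in> space \<nu> \<Longrightarrow> f S x \<ge> 0"
    and g_pos: "\<And>x. x \<in> space \<nu> \<Longrightarrow> g x > 0"
    and g_int: "(\<integral>\<^sup>+ x. ennreal (g x) \<partial>\<nu>) = 1"
    and chi2: "\<And>S. S \<in> H \<Longrightarrow> (\<integral>\<^sup>+ x. ennreal (f S x ^ 2 / g x) \<partial>\<nu>) \<le> ennreal E"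
    and overlap: "\<And>x. x \<in> space \<nu> \<Longrightarrow> real (card {S \<in> H. x \<in> A S}) \<le> N"
    and E: "E > 0" and N: "N > 0"
  shows "(\<Sum>S\<in>H. \<integral>\<^sup>+ x. ennreal (f S x) * indicator (A S) x \<partial>\<nu>) \<le> ennreal (sqrt (real (card H) * E * N))"
proof -
  define t where "t = sqrt (N / (card H * E))"
  have hc: "real (card H) > 0"
    using H by (simp add: card_gt_0_iff)
  then have t: "t > 0"
    using E N by (simp add: t_def)
  have sum_const: "(\<Sum>S\<in>H. ennreal (t / 2 * E)) = ennreal (real (card H) * (t / 2 * E))"
    using t E by (subst sum_ennreal) auto
  have sum_g: "(\<Sum>S\<in>H. \<integral>\<^sup>+ x. ennreal (g x) * indicator (A S) x \<partial>\<nu>) \<le> ennreal N"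
    by (rule sum_nn_integral_indicator_le[OF H(1)]) (auto intro: g_int overlap)
  have "(\<Sum>S\<in>H. \<integral>\<^sup>+ x. ennreal (f S x) * indicator (A S) x \<partial>\<nu>)
      \<le> (\<Sum>S\<in>H. ennreal (t / 2 * E) + ennreal (1 / (2 * t)) * (\<integral>\<^sup>+ x. ennreal (g x) * indicator (A S) x \<partial>\<nu>))"
    using t E f_nonneg g_pos chi2 by (intro sum_mono nn_integral_indicator_le_chi2) auto
  also have "\<dots> = (\<Sum>S\<in>H. ennreal (t / 2 * E))
      + ennreal (1 / (2 * t)) * (\<Sum>S\<in>H. \<integral>\<^sup>+ x. ennreal (g x) * indicator (A S) x \<partial>\<nu>)"
    by (simp add: sum.distrib sum_distrib_left)
  also have "\<dots> \<le> ennreal (real (card H) * (t / 2 * E)) + ennreal (1 / (2 * t)) * ennreal N"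
    unfolding sum_const by (rule add_left_mono, rule mult_left_mono[OF sum_g]) simp
  also have "ennreal (1 / (2 * t)) * ennreal N = ennreal (1 / (2 * t) * N)"
    by (rule ennreal_mult[symmetric]) (use t N in auto)
  also have "ennreal (real (card H) * (t / 2 * E)) + ennreal (1 / (2 * t) * N)
      = ennreal (real (card H) * E * (t / 2) + 1 / (2 * t) * N)"
    using t E N by (subst ennreal_plus[symmetric]) (auto simp: algebra_simps)
  also have "real (card H) * E * (t / 2) + 1 / (2 * t) * N = sqrt (real (card H) * E * N)"
    unfolding t_def using hc E N by (intro sqrt_balance) auto
  finally show ?thesis .
qed

lemma delta_le_mass_plus_risk:
  fixes f loss :: "'x \<Rightarrow> real" and \<delta> :: real
  assumes [measurable]: "f \<in> borel_measurable \<nu>" "loss \<in> borel_measurable \<nu>"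
    and f_int: "(\<integral>\<^sup>+ x. ennreal (f x) \<partial>\<nu>) = 1"
  shows "ennreal \<delta> \<le> ennreal \<delta> * (\<integral>\<^sup>+ x. ennreal (f x) * indicator {x \<in> space \<nu>. loss x < \<delta>} x \<partial>\<nu>)
    + (\<integral>\<^sup>+ x. ennreal (f x) * ennreal (loss x) \<partial>\<nu>)"
proof -
  let ?A = "{x \<in> space \<nu>. loss x < \<delta>}"
  have "ennreal \<delta> = (\<integral>\<^sup>+ x. ennreal \<delta> * ennreal (f x) \<partial>\<nu>)"
    by (simp add: nn_integral_cmult f_int)
  also have "\<dots> \<le> (\<integral>\<^sup>+ x. ennreal \<delta> * (ennreal (f x) * indicator ?A x) + ennreal (f x) * ennreal (loss x) \<partial>\<nu>)"
  proof (intro nn_integral_mono)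
    fix x assume x: "x \<in> space \<nu>"
    show "ennreal \<delta> * ennreal (f x) \<le> ennreal \<delta> * (ennreal (f x) * indicator ?A x) + ennreal (f x) * ennreal (loss x)"
    proof (cases "x \<in> ?A")
      case False
      then have "ennreal \<delta> \<le> ennreal (loss x)"
        using x by (auto intro: ennreal_leI)
      then have "ennreal \<delta> * ennreal (f x) \<le> ennreal (loss x) * ennreal (f x)"
        by (rule mult_right_mono) simp
      then show ?thesis
        using False by (simp add: mult.commute)
    qed simp
  qed
  also have "\<dots> = ennreal \<delta> * (\<integral>\<^sup>+ x. ennreal (f x) * indicator ?A x \<partial>\<nu>) + (\<integral>\<^sup>+ x. ennreal (f x) * ennreal (loss x) \<partial>\<nu>)"
    by (simp add: nn_integral_add nn_integral_cmult)
  finally show ?thesis .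
qed

lemma ennreal_le_of_average_bound:
  fixes h \<delta> s :: real and R :: ennreal
  assumes avg: "ennreal (h * \<delta>) \<le> ennreal \<delta> * ennreal s + ennreal h * R"
    and "h > 0" "\<delta> \<ge> 0" "s \<ge> 0"
  shows "ennreal (\<delta> * (1 - s / h)) \<le> R"
proof (cases R)
  case (real \<rho>)
  have "ennreal \<delta> * ennreal s = ennreal (\<delta> * s)" "ennreal h * ennreal \<rho> = ennreal (h * \<rho>)"
    using assms real by (simp_all add: ennreal_mult)
  then have "ennreal (h * \<delta>) \<le> ennreal (\<delta> * s + h * \<rho>)"
    using avg assms real by (subst ennreal_plus) auto
  then have "h * \<delta> \<le> \<delta> * s + h * \<rho>"
    using assms real by (subst (asm) ennreal_le_iff) auto
  then have "h * (\<delta> * (1 - s / h)) \<le> h * \<rho>"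
    using assms by (simp add: algebra_simps)
  then show ?thesis
    using assms real by (simp add: ennreal_leI)
qed simp

text \<open>A chi-square variant of Fano's method: each hypothesis \<open>S\<close> either has loss at least
  \<open>\<delta>\<close> or puts its mass on \<open>A S\<close>, where its loss is below \<open>\<delta>\<close>; since no point lies in more
  than \<open>N\<close> of the sets \<open>A S\<close>, their total mass is at most \<open>sqrt (card H * E * N)\<close>.\<close>

lemma exists_risk_ge_of_bounded_overlap:
  fixes f loss :: "'h \<Rightarrow> 'x \<Rightarrow> real" and g :: "'x \<Rightarrow> real" and E N \<delta> :: real
  assumes H: "finite H" "H \<noteq> {}"
    and [measurable]: "\<And>S. S \<in> H \<Longrightarrow> f S \<in> borel_measurable \<nu>" "g \<in> borel_measurable \<nu>"
      "\<And>S. S \<in> H \<Longrightarrow> loss S \<in> borel_measurable \<nu>"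
    and f_nonneg: "\<And>S x. S \<in> H \<Longrightarrow> x \<in> space \<nu> \<Longrightarrow> f S x \<ge> 0"
    and g_pos: "\<And>x. x \<in> space \<nu> \<Longrightarrow> g x > 0"
    and f_int: "\<And>S. S \<in> H \<Longrightarrow> (\<integral>\<^sup>+ x. ennreal (f S x) \<partial>\<nu>) = 1"
    and g_int: "(\<integral>\<^sup>+ x. ennreal (g x) \<partial>\<nu>) = 1"
    and chi2: "\<And>S. S \<in> H \<Longrightarrow> (\<integral>\<^sup>+ x. ennreal (f S x ^ 2 / g x) \<partial>\<nu>) \<le> ennreal E"
    and overlap: "\<And>x. x \<in> space \<nu> \<Longrightarrow> real (card {S \<in> H. loss S x < \<delta>}) \<le> N"
    and E: "E > 0" and N: "N > 0" and \<delta>: "\<delta> \<ge> 0"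
  shows "\<exists>S\<in>H. ennreal (\<delta> * (1 - sqrt (N * E / card H))) \<le> (\<integral>\<^sup>+ x. ennreal (f S x) * ennreal (loss S x) \<partial>\<nu>)"
proof -
  define A where "A S = {x \<in> space \<nu>. loss S x < \<delta>}" for S
  define R where "R S = (\<integral>\<^sup>+ x. ennreal (f S x) * ennreal (loss S x) \<partial>\<nu>)" for S
  define h where "h = real (card H)"
  have h: "h > 0"
    using H by (simp add: h_def card_gt_0_iff)
  have "Max (R ` H) \<in> R ` H"
    using H by (intro Max_in) auto
  then obtain S where S: "S \<in> H" "R S = Max (R ` H)"
    by auto
  have "(\<Sum>S'\<in>H. R S') \<le> (\<Sum>S'\<in>H. R S)"
    using H by (intro sum_mono) (simp add: S(2))
  then have sum_R: "(\<Sum>S'\<in>H. R S') \<le> ennreal h * R S"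
    by (simp add: h_def ennreal_of_nat_eq_real_of_nat)
  have sum_mass: "(\<Sum>S'\<in>H. \<integral>\<^sup>+ x. ennreal (f S' x) * indicator (A S') x \<partial>\<nu>) \<le> ennreal (sqrt (h * E * N))"
    unfolding h_def A_def using H f_nonneg g_pos g_int chi2 E N
    by (intro sum_nn_integral_indicator_le_sqrt) (auto intro: overlap)
  have "ennreal (h * \<delta>) = (\<Sum>S'\<in>H. ennreal \<delta>)"
    using \<delta> by (simp add: h_def ennreal_of_nat_eq_real_of_nat ennreal_mult)
  also have "\<dots> \<le> (\<Sum>S'\<in>H. ennreal \<delta> * (\<integral>\<^sup>+ x. ennreal (f S' x) * indicator (A S') x \<partial>\<nu>) + R S')"
    unfolding A_def R_def using f_int by (intro sum_mono delta_le_mass_plus_risk) auto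
  also have "\<dots> = ennreal \<delta> * (\<Sum>S'\<in>H. \<integral>\<^sup>+ x. ennreal (f S' x) * indicator (A S') x \<partial>\<nu>) + (\<Sum>S'\<in>H. R S')"
    by (simp add: sum.distrib sum_distrib_left)
  also have "\<dots> \<le> ennreal \<delta> * ennreal (sqrt (h * E * N)) + ennreal h * R S"
    by (rule add_mono[OF mult_left_mono[OF sum_mass] sum_R]) simp
  finally have "ennreal (\<delta> * (1 - sqrt (h * E * N) / h)) \<le> R S"
    using h \<delta> E N by (intro ennreal_le_of_average_bound) auto
  moreover have "sqrt (h * E * N) / h = sqrt (N * E / h)"
  proof -
    have "sqrt h * sqrt h = h"
      using h by simp
    then show ?thesis
      using h by (simp add: real_sqrt_divide real_sqrt_mult field_simps)
  qed
  ultimately show ?thesis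
    using S(1) by (auto simp: R_def h_def)
qed

lemma card_subsets_lt_le_exp:
  fixes x T :: real
  assumes A: "finite A" and x: "0 < x" "x \<le> 1"
  shows "real (card {D \<in> Pow A. real (card D) < T}) \<le> exp (real (card A) * ln (1 + x) - T * ln x)"
proof -
  let ?B = "{D \<in> Pow A. real (card D) < T}"
  have "real (card ?B) * x powr T = (\<Sum>D\<in>?B. x powr T)"
    by simp
  also have "\<dots> \<le> (\<Sum>D\<in>?B. x ^ card D)"
    using x by (intro sum_mono) (auto simp: powr_realpow[symmetric] intro: powr_mono')
  also have "\<dots> \<le> (\<Sum>D\<in>Pow A. x ^ card D)"
    using A x by (intro sum_mono2) auto
  also have "\<dots> = (1 + x) ^ card A"
    using prod_add[OF A, of "\<lambda>_. x" "\<lambda>_. 1"] by (simp add: add.commute)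
  finally have "real (card ?B) \<le> (1 + x) ^ card A / x powr T"
    using x by (simp add: le_divide_eq)
  also have "\<dots> = exp (real (card A) * ln (1 + x) - T * ln x)"
    using x by (simp add: exp_diff exp_of_nat_mult powr_def mult.commute)
  finally show ?thesis .
qed

lemma card_sym_diff_lt_le:
  assumes "finite A" "S \<subseteq> A" "H \<subseteq> Pow A"
  shows "card {S'\<in>H. real (card (sym_diff S S')) < T} \<le> card {D \<in> Pow A. real (card D) < T}"
proof (rule card_inj_on_le[where f = "sym_diff S"])
  show "inj_on (sym_diff S) {S' \<in> H. real (card (sym_diff S S')) < T}"
    by (auto simp: inj_on_def)
qed (use assms in auto)

section \<open>The lower bound for generalized linear models\<close>

lemma sqrt_exp_le_8_9:
  assumes "z \<le> -1/4"
  shows "sqrt (exp z) \<le> 8/9"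
proof -
  have "exp z = (exp (z / 2))\<^sup>2"
    by (simp add: power2_eq_square flip: exp_add)
  then have "sqrt (exp z) = exp (z / 2)"
    by simp
  also have "\<dots> \<le> exp (-1/8)"
    using assms by simp
  also have "\<dots> \<le> 8/9"
    using exp_ge_add_one_self[of "1/8::real"] by (simp add: exp_minus field_simps)
  finally show ?thesis .
qed

context glm
begin

lemma b_measurable[measurable]: "b \<in> borel_measurable borel"
  using b_deriv by (intro borel_measurable_continuous_onI continuous_at_imp_continuous_on)
    (auto intro: DERIV_isCont)

lemma risk_eq_nn_integral:
  assumes "\<theta>h \<in> estimators n"
  shows "risk n p X \<mu> a b b1 c \<theta>h \<beta> = (\<integral>\<^sup>+ y. ennreal (F n (matvec p X \<beta>) y)
      * ennreal (KL a b b1 n (matvec p X \<beta>) (\<theta>h y)) \<partial>PiM {..<n} (\<lambda>_. \<mu>))"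
proof -
  have [measurable]: "(\<lambda>y. \<theta>h y i) \<in> borel_measurable (PiM {..<n} (\<lambda>_. \<mu>))" if "i \<in> {..<n}" for i
    using assms that measurable_cong_sets[OF sets_PiM_mu refl] by (auto simp: estimators_def)
  show ?thesis
    unfolding risk_def data_dist_def data_dist_eq_density
    by (rule nn_integral_density) (simp_all add: KL_def)
qed

lemma sqnorm_diff_lt_of_KL_lt:
  assumes "\<And>i. i < n \<Longrightarrow> \<theta> i \<in> \<Theta>" "\<And>i. i < n \<Longrightarrow> \<theta>' i \<in> \<Theta>"
    and "KL a b b1 n \<theta> \<zeta> < \<delta>" "KL a b b1 n \<theta>' \<zeta> < \<delta>"
  shows "sqnorm n (\<lambda>i. \<theta> i - \<theta>' i) < 8 * a * \<delta> / L"
proof -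
  define z where "z i = closest_point \<Theta> (\<zeta> i)" for i
  have "L / (2 * a) * (\<Sum>i<n. (z i - \<theta> i)\<^sup>2) < \<delta>" "L / (2 * a) * (\<Sum>i<n. (z i - \<theta>' i)\<^sup>2) < \<delta>"
    unfolding z_def using KL_ge_closest_point assms by (blast intro: order.strict_trans1)+
  then have "(\<Sum>i<n. (z i - \<theta> i)\<^sup>2) < 2 * a * \<delta> / L" "(\<Sum>i<n. (z i - \<theta>' i)\<^sup>2) < 2 * a * \<delta> / L"
    using L_pos a_pos by (simp_all add: field_simps)
  moreover have "8 * a * \<delta> / L = 4 * (2 * a * \<delta> / L)"
    by simp
  moreover have "sqnorm n (\<lambda>i. \<theta> i - \<theta>' i) \<le> 2 * (\<Sum>i<n. (z i - \<theta> i)\<^sup>2) + 2 * (\<Sum>i<n. (z i - \<theta>' i)\<^sup>2)"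
    unfolding sqnorm_def sum_distrib_left sum.distrib[symmetric]
  proof (intro sum_mono)
    fix i
    show "(\<theta> i - \<theta>' i)\<^sup>2 \<le> 2 * (z i - \<theta> i)\<^sup>2 + 2 * (z i - \<theta>' i)\<^sup>2"
      using zero_le_power2[of "2 * z i - \<theta> i - \<theta>' i"] by (simp add: power2_eq_square algebra_simps)
  qed
  ultimately show ?thesis
    by (smt (verit))
qed

text \<open>Two vertices \<open>S, S'\<close> that are both \<open>\<delta>\<close>-close in KL to the same point have
  \<open>\<phi>\<^sub>m\<^sub>i\<^sub>n C\<^sup>2 |S \<triangle> S'| \<le> \<parallel>X (\<beta>\<^sub>S - \<beta>\<^sub>S')\<parallel>\<^sup>2 < 8 a \<delta> / L\<close>, so all of them lie in a
  symmetric-difference ball around any one of them.\<close>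

lemma card_KL_close_vertices_le:
  fixes Us :: "nat set" and H :: "nat set set" and x T :: real
  assumes H: "H \<subseteq> Pow Us" and Us: "Us \<subseteq> {..<p}" and C: "C > 0"
    and in_Theta: "\<And>S i. S \<in> H \<Longrightarrow> i < n \<Longrightarrow> matvec p X (cube_vertex C S) i \<in> \<Theta>"
    and diam: "\<And>S S'. S \<in> H \<Longrightarrow> S' \<in> H \<Longrightarrow> card (sym_diff S S') \<le> k"
    and phi_min: "phi_min n p X k > 0"
    and x: "0 < x" "x \<le> 1"
  shows "real (card {S \<in> H. KL a b b1 n (matvec p X (cube_vertex C S)) \<zeta> < L / (8 * a) * phi_min n p X k * C\<^sup>2 * T})
    \<le> exp (real (card Us) * ln (1 + x) - T * ln x)"
    (is "real (card ?Q) \<le> _")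
proof (cases "?Q = {}")
  case False
  then obtain S0 where S0: "S0 \<in> ?Q" by auto
  have fin: "finite Us"
    using Us finite_subset by blast
  then have fin_H: "finite H"
    using H by (meson finite_Pow_iff finite_subset)
  have "real (card (sym_diff S0 S)) < T" if S: "S \<in> ?Q" for S
  proof -
    have sub: "S0 \<subseteq> {..<p}" "S \<subseteq> {..<p}"
      using S0 S H Us by auto
    have "phi_min n p X k * (C\<^sup>2 * card (sym_diff S0 S))
        \<le> sqnorm n (matvec p X (\<lambda>j. cube_vertex C S0 j - cube_vertex C S j))"
      using phi_min_le_sqnorm_matvec[OF cube_vertex_diff_in_vecs[OF sub]] diam S0 S C
      by (simp add: sqnorm_cube_vertex_diff[OF sub] l0_cube_vertex_diff[OF sub])
    also have "\<dots> = sqnorm n (\<lambda>i. matvec p X (cube_vertex C S0) i - matvec p X (cube_vertex C S) i)"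
      by (simp add: sqnorm_def matvec_diff)
    also have "\<dots> < 8 * a * (L / (8 * a) * phi_min n p X k * C\<^sup>2 * T) / L"
      using S0 S in_Theta by (intro sqnorm_diff_lt_of_KL_lt) auto
    also have "\<dots> = phi_min n p X k * (C\<^sup>2 * T)"
      using L_pos a_pos by simp
    finally show ?thesis
      using phi_min C by simp
  qed
  then have "card ?Q \<le> card {S \<in> H. real (card (sym_diff S0 S)) < T}"
    using fin_H by (intro card_mono) auto
  also have "\<dots> \<le> card {D \<in> Pow Us. real (card D) < T}"
    using S0 H fin by (intro card_sym_diff_lt_le) auto
  finally show ?thesis
    using card_subsets_lt_le_exp[OF fin x, of T] by linarith
next
  case True
  then show ?thesis
    by (metis card.empty of_nat_0 exp_ge_zero)
qed

text \<open>The exponent condition gives \<open>sqrt (N * E / card H) \<le> 8/9\<close> in the previous bound,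
  hence the factor \<open>1/9\<close> (and \<open>72 = 8 * 9\<close>).\<close>

lemma exists_vertex_risk_ge:
  fixes Us :: "nat set" and H :: "nat set set" and x T V :: real
  assumes H: "finite H" "H \<noteq> {}" "H \<subseteq> Pow Us" and Us: "Us \<subseteq> {..<p}" and C: "C > 0"
    and in_Theta: "\<And>S i. S \<in> H \<Longrightarrow> i < n \<Longrightarrow> matvec p X (cube_vertex C S) i \<in> \<Theta>"
    and V: "\<And>S. S \<in> H \<Longrightarrow> sqnorm n (matvec p X (cube_vertex C S)) \<le> V"
    and diam: "\<And>S S'. S \<in> H \<Longrightarrow> S' \<in> H \<Longrightarrow> card (sym_diff S S') \<le> k"
    and phi_min: "phi_min n p X k > 0"
    and est: "\<theta>h \<in> estimators n"
    and x: "0 < x" "x \<le> 1" and T: "T > 0"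
    and exponent: "real (card Us) * ln (1 + x) - T * ln x + U / a * V - ln (card H) \<le> -1/4"
  shows "\<exists>S\<in>H. ennreal (L / (72 * a) * phi_min n p X k * C\<^sup>2 * T) \<le> risk n p X \<mu> a b b1 c \<theta>h (cube_vertex C S)"
proof -
  define \<delta> where "\<delta> = L / (8 * a) * phi_min n p X k * C\<^sup>2 * T"
  define N where "N = exp (real (card Us) * ln (1 + x) - T * ln x)"
  define E where "E = exp (U / a * V)"
  define \<theta> where "\<theta> S = matvec p X (cube_vertex C S)" for S
  have \<delta>: "\<delta> > 0"
    using L_pos a_pos phi_min C T by (simp add: \<delta>_def)
  have [measurable]: "(\<lambda>y. \<theta>h y i) \<in> borel_measurable (PiM {..<n} (\<lambda>_. \<mu>))" if "i \<in> {..<n}" for i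
    using est that measurable_cong_sets[OF sets_PiM_mu refl] by (auto simp: estimators_def)
  have "\<exists>S\<in>H. ennreal (\<delta> * (1 - sqrt (N * E / card H)))
      \<le> (\<integral>\<^sup>+ y. ennreal (F n (\<theta> S) y) * ennreal (KL a b b1 n (\<theta> S) (\<theta>h y)) \<partial>PiM {..<n} (\<lambda>_. \<mu>))"
  proof (rule exists_risk_ge_of_bounded_overlap[where g = "F n (\<lambda>_. 0)"])
    show "(\<integral>\<^sup>+ y. ennreal (F n (\<theta> S) y ^ 2 / F n (\<lambda>_. 0) y) \<partial>PiM {..<n} (\<lambda>_. \<mu>)) \<le> ennreal E"
      if "S \<in> H" for S
    proof -
      have "U / a * sqnorm n (\<theta> S) \<le> U / a * V"
        using V[OF that] a_pos L_pos L_le_U by (intro mult_left_mono) (auto simp: \<theta>_def)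
      with chi2_joint_density_le[of n "\<theta> S"] show ?thesis
        by (elim order.trans) (simp add: E_def ennreal_leI)
    qed
    show "real (card {S \<in> H. KL a b b1 n (\<theta> S) (\<theta>h y) < \<delta>}) \<le> N" for y
      unfolding \<theta>_def \<delta>_def N_def
      using card_KL_close_vertices_le[OF H(3) Us C in_Theta diam phi_min x] by blast
  qed (use H \<delta> in \<open>auto simp: joint_density_pos less_imp_le nn_integral_joint_density_eq_1 KL_def E_def N_def\<close>)
  then obtain S where S: "S \<in> H" and risk_S: "ennreal (\<delta> * (1 - sqrt (N * E / card H)))
      \<le> (\<integral>\<^sup>+ y. ennreal (F n (\<theta> S) y) * ennreal (KL a b b1 n (\<theta> S) (\<theta>h y)) \<partial>PiM {..<n} (\<lambda>_. \<mu>))"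
    by blast
  have "sqrt (N * E / card H) \<le> 8/9"
  proof -
    have "N * E / card H = exp (real (card Us) * ln (1 + x) - T * ln x + U / a * V - ln (card H))"
      using H by (simp add: N_def E_def exp_add exp_diff card_gt_0_iff)
    then show ?thesis
      using sqrt_exp_le_8_9[OF exponent] by simp
  qed
  then have "\<delta> * (1/9) \<le> \<delta> * (1 - sqrt (N * E / card H))"
    using \<delta> by (intro mult_left_mono) auto
  then have "L / (72 * a) * phi_min n p X k * C\<^sup>2 * T \<le> \<delta> * (1 - sqrt (N * E / card H))"
    by (simp add: \<delta>_def)
  then have "ennreal (L / (72 * a) * phi_min n p X k * C\<^sup>2 * T) \<le> ennreal (\<delta> * (1 - sqrt (N * E / card H)))"
    by (rule ennreal_leI)
  also have "\<dots> \<le> risk n p X \<mu> a b b1 c \<theta>h (cube_vertex C S)"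
    using risk_S by (simp add: risk_eq_nn_integral[OF est] \<theta>_def)
  finally show ?thesis
    using S by blast
qed

lemma minimax_risk_ge_cube:
  fixes Us :: "nat set" and H :: "nat set set" and x T V :: real
  assumes H: "finite H" "H \<noteq> {}" "H \<subseteq> Pow Us" and Us: "Us \<subseteq> {..<p}" and C: "C > 0"
    and in_B: "\<And>S. S \<in> H \<Longrightarrow> cube_vertex C S \<in> B_set n p X \<Theta> p0"
    and V: "\<And>S. S \<in> H \<Longrightarrow> sqnorm n (matvec p X (cube_vertex C S)) \<le> V"
    and diam: "\<And>S S'. S \<in> H \<Longrightarrow> S' \<in> H \<Longrightarrow> card (sym_diff S S') \<le> k"
    and phi_min: "phi_min n p X k > 0"
    and x: "0 < x" "x \<le> 1" and T: "T > 0"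
    and exponent: "real (card Us) * ln (1 + x) - T * ln x + U / a * V - ln (card H) \<le> -1/4"
  shows "ennreal (L / (72 * a) * phi_min n p X k * C\<^sup>2 * T)
    \<le> (INF \<theta>h\<in>estimators n. SUP \<beta>\<in>B_set n p X \<Theta> p0. risk n p X \<mu> a b b1 c \<theta>h \<beta>)"
proof (rule INF_greatest)
  fix \<theta>h assume est: "\<theta>h \<in> estimators n"
  have in_Theta: "matvec p X (cube_vertex C S) i \<in> \<Theta>" if "S \<in> H" "i < n" for S i
    using in_B that by (auto simp: B_set_def)
  obtain S where "S \<in> H" "ennreal (L / (72 * a) * phi_min n p X k * C\<^sup>2 * T)
      \<le> risk n p X \<mu> a b b1 c \<theta>h (cube_vertex C S)"
    using exists_vertex_risk_ge[OF H Us C in_Theta V diam phi_min est x T exponent] by blast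
  then show "ennreal (L / (72 * a) * phi_min n p X k * C\<^sup>2 * T)
      \<le> (SUP \<beta>\<in>B_set n p X \<Theta> p0. risk n p X \<mu> a b b1 c \<theta>h \<beta>)"
    using in_B by (blast intro: SUP_upper2)
qed

end

lemma exp_minus_3_le: "exp (-3::real) \<le> 1/4"
  using exp_ge_add_one_self[of 3] by (simp add: exp_minus field_simps)

lemma sparse_exponent_le:
  fixes p p0 :: nat
  assumes p0: "1 \<le> p0" "2 * p0 \<le> p"
  shows "real p * ln (1 + exp (-3) * p0 / p) - p0 / 40 * ln (exp (-3) * p0 / p)
    + p0 / 32 * ln (p * exp 1 / p0) - ln (p choose p0) \<le> -1/4"
proof -
  define R where "R = real p / real p0"
  have R: "R \<ge> 2" "real p = R * p0" "exp (-3) * p0 / p = exp (-3) / R"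
    using p0 by (auto simp: R_def field_simps)
  have ln_R: "ln R \<ge> 2/3"
    using ln2_ge_two_thirds ln_le_cancel_iff[of 2 R] R(1) by linarith
  have "R * ln (1 + exp (-3) / R) \<le> exp (-3)"
    using R(1) ln_add_one_self_le_self[of "exp (-3) / R"] mult_left_mono[of _ "exp (-3) / R" R] by simp
  also note exp_minus_3_le
  finally have ln_1p: "R * ln (1 + exp (-3) / R) \<le> 1/4" .
  have "R ^ p0 \<le> real (p choose p0)"
    unfolding R_def using p0 by (intro binomial_ge_n_over_k_pow_k) simp
  then have "ln (R ^ p0) \<le> ln (p choose p0)"
    using R(1) p0 by (subst ln_le_cancel_iff) auto
  then have ln_choose: "p0 * ln R \<le> ln (p choose p0)"
    using R(1) by (simp add: ln_realpow)
  have "real p * ln (1 + exp (-3) * p0 / p) - p0 / 40 * ln (exp (-3) * p0 / p)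
      + p0 / 32 * ln (p * exp 1 / p0) - ln (p choose p0)
      \<le> p0 * (R * ln (1 + exp (-3) / R)) + p0 / 40 * (3 + ln R) + p0 / 32 * (1 + ln R) - p0 * ln R"
    using R ln_choose p0 by (simp add: ln_div ln_mult R_def[symmetric] field_simps)
  also have "\<dots> \<le> p0 * (1/4 + 3/40 + 1/32 - 151/160 * ln R)"
    using mult_left_mono[OF ln_1p, of "real p0"] by (simp add: ring_distribs)
  also have "\<dots> \<le> 1 * (1/4 + 3/40 + 1/32 - 151/160 * ln R)"
    using ln_R p0 by (intro mult_right_mono_neg) auto
  also have "\<dots> \<le> -1/4"
    using ln_R by simp
  finally show ?thesis .
qed

lemma dense_exponent_le:
  fixes p0 :: nat
  assumes "1 \<le> p0"
  shows "p0 * ln (1 + exp (-3)) - p0 / 40 * ln (exp (-3)) + ln 2 / 64 * p0 - ln (2 ^ p0) \<le> -1/4"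
proof -
  have "ln (1 + exp (-3::real)) \<le> 1/4"
    using ln_add_one_self_le_self[of "exp (-3)"] exp_minus_3_le by simp
  then have q: "ln (1 + exp (-3::real)) + 3/40 + ln 2 / 64 - ln 2 \<le> -1/4"
    using ln2_ge_two_thirds by simp
  then have "p0 * (ln (1 + exp (-3::real)) + 3/40 + ln 2 / 64 - ln 2)
      \<le> 1 * (ln (1 + exp (-3::real)) + 3/40 + ln 2 / 64 - ln 2)"
    using assms by (intro mult_right_mono_neg) auto
  then show ?thesis
    using q by (simp add: ln_realpow algebra_simps)
qed

context glm
begin

lemma minimax_risk_ge_sparse:
  fixes p0 :: nat
  assumes p0: "1 \<le> p0" "2 * p0 \<le> p"
    and sub: "Btilde1 p (sqrt (1/16 * (1/2) * (a / U) * inverse (phi_max n p X (2 * p0))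
                * ln (real p * exp 1 / real p0))) p0 \<subseteq> B_set n p X \<Theta> p0"
  shows "ennreal (1/552960 * (L / U) * tau n p X (2 * p0) * real p0 * ln (real p * exp 1 / real p0))
    \<le> (INF \<theta>h\<in>estimators n. SUP \<beta>\<in>B_set n p X \<Theta> p0. risk n p X \<mu> a b b1 c \<theta>h \<beta>)"
proof -
  define k where "k = 2 * p0"
  define l where "l = ln (real p * exp 1 / real p0)"
  have "ln (real p0) \<le> ln (real p)" "l = 1 + ln (real p) - ln (real p0)"
    using p0 by (simp_all add: l_def ln_mult ln_div)
  then have l: "l > 0"
    by linarith
  show ?thesis
  proof (cases "tau n p X k > 0")
    case False
    then have "1/552960 * (L / U) * tau n p X k * real p0 * l \<le> 0"
      using L_pos L_le_U l by (intro mult_nonpos_nonneg mult_nonneg_nonpos) auto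
    then show ?thesis
      by (simp add: ennreal_neg k_def l_def)
  next
    case True
    then have phi: "phi_min n p X k > 0" "phi_max n p X k > 0"
      using p0 phi_pos_of_tau_pos[of p k n X] by (auto simp: k_def)
    define C where "C = sqrt (1/16 * (1/2) * (a / U) * inverse (phi_max n p X k) * l)"
    have C: "C > 0" "C\<^sup>2 = a * l / (32 * U * phi_max n p X k)"
      using phi l a_pos L_pos L_le_U by (auto simp: C_def field_simps)
    define H where "H = {S. S \<subseteq> {..<p} \<and> card S = p0}"
    have H: "finite H" "H \<noteq> {}" "H \<subseteq> Pow {..<p}" "card H = p choose p0"
      using p0 n_subsets[of "{..<p}" p0]
      by (auto simp: H_def intro!: exI[of _ "{..<p0}"] finite_subset[of _ "Pow {..<p}"])
    have "cube_vertex C S \<in> Btilde1 p C p0" if "S \<in> H" for S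
      using that C by (intro cube_vertex_in_Btilde1) (auto simp: H_def)
    then have in_B: "cube_vertex C S \<in> B_set n p X \<Theta> p0" if "S \<in> H" for S
      using that sub unfolding C_def k_def l_def by blast
    have V: "sqnorm n (matvec p X (cube_vertex C S)) \<le> phi_max n p X k * C\<^sup>2 * p0" if "S \<in> H" for S
      using that phi by (intro sqnorm_matvec_cube_vertex_le) (auto simp: H_def k_def)
    have diam: "card (sym_diff S S') \<le> k" if "S \<in> H" "S' \<in> H" for S S'
      using that card_Un_le[of S S'] card_mono[of "S \<union> S'" "sym_diff S S'"] finite_subset[of _ "{..<p}"]
      by (force simp: H_def k_def)
    have "exp (-3) * p0 \<le> 1 * real p"
      using p0 by (intro mult_mono) auto
    then have x: "0 < exp (-3) * p0 / p" "exp (-3) * p0 / p \<le> 1"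
      using p0 by (auto simp: field_simps)
    have exponent: "real (card {..<p}) * ln (1 + exp (-3) * p0 / p) - p0 / 40 * ln (exp (-3) * p0 / p)
        + U / a * (phi_max n p X k * C\<^sup>2 * p0) - ln (card H) \<le> -1/4"
      using sparse_exponent_le[OF p0] phi a_pos L_pos L_le_U by (simp add: C H l_def field_simps)
    have "ennreal (1/552960 * (L / U) * tau n p X k * real p0 * l)
        \<le> ennreal (L / (72 * a) * phi_min n p X k * C\<^sup>2 * (p0 / 40))"
      using phi a_pos L_pos L_le_U l by (intro ennreal_leI) (simp add: C tau_def field_simps)
    also have "\<dots> \<le> (INF \<theta>h\<in>estimators n. SUP \<beta>\<in>B_set n p X \<Theta> p0. risk n p X \<mu> a b b1 c \<theta>h \<beta>)"
      by (rule minimax_risk_ge_cube[OF H(1-3) subset_refl C(1) in_B V diam phi(1) x _ exponent])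
        (use p0 in auto)
    finally show ?thesis
      by (simp add: k_def l_def)
  qed
qed

lemma minimax_risk_ge_dense:
  fixes p0 r :: nat
  assumes p0: "1 \<le> p0" "p0 \<le> p" and r: "r \<le> 2 * p0"
    and sub: "Btilde2 p (sqrt (ln 2 / 64 * (a / U) * inverse (phi_max n p X p0))) p0 \<subseteq> B_set n p X \<Theta> p0"
  shows "ennreal (1/552960 * (L / U) * tau n p X p0 * real r)
    \<le> (INF \<theta>h\<in>estimators n. SUP \<beta>\<in>B_set n p X \<Theta> p0. risk n p X \<mu> a b b1 c \<theta>h \<beta>)"
proof (cases "tau n p X p0 > 0")
  case False
  then have "1/552960 * (L / U) * tau n p X p0 * real r \<le> 0"
    using L_pos L_le_U by (intro mult_nonpos_nonneg mult_nonneg_nonpos) auto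
  then show ?thesis
    by (simp add: ennreal_neg)
next
  case True
  then have phi: "phi_min n p X p0 > 0" "phi_max n p X p0 > 0"
    using p0 phi_pos_of_tau_pos[of p p0 n X] by auto
  define C where "C = sqrt (ln 2 / 64 * (a / U) * inverse (phi_max n p X p0))"
  have C: "C > 0" "C\<^sup>2 = ln 2 * a / (64 * U * phi_max n p X p0)"
    using phi a_pos L_pos L_le_U by (auto simp: C_def field_simps)
  define H where "H = Pow {..<p0}"
  have H: "finite H" "H \<noteq> {}" "H \<subseteq> Pow {..<p0}" "card H = 2 ^ p0"
    by (auto simp: H_def card_Pow)
  have in_B: "cube_vertex C S \<in> B_set n p X \<Theta> p0" if "S \<in> H" for S
    using that sub cube_vertex_in_Btilde2[of S p0 p C] p0 unfolding C_def H_def by auto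
  have V: "sqnorm n (matvec p X (cube_vertex C S)) \<le> phi_max n p X p0 * C\<^sup>2 * p0" if "S \<in> H" for S
    using that phi p0 card_mono[of "{..<p0}" S] by (intro sqnorm_matvec_cube_vertex_le) (auto simp: H_def)
  have diam: "card (sym_diff S S') \<le> p0" if "S \<in> H" "S' \<in> H" for S S'
    using that card_mono[of "{..<p0}" "sym_diff S S'"] by (auto simp: H_def)
  have exponent: "real (card {..<p0}) * ln (1 + exp (-3)) - p0 / 40 * ln (exp (-3))
      + U / a * (phi_max n p X p0 * C\<^sup>2 * p0) - ln (card H) \<le> -1/4"
    using dense_exponent_le[OF p0(1)] phi a_pos L_pos L_le_U by (simp add: C H field_simps)
  have "2 * real p0 \<le> 3 * ln 2 * p0"
    using ln2_ge_two_thirds by (intro mult_right_mono) auto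
  then have "1/552960 * ((L / U) * tau n p X p0) * real r
      \<le> 1/552960 * ((L / U) * tau n p X p0) * (3 * (ln 2 * p0))"
    using r True L_pos L_le_U by (intro mult_left_mono) auto
  then have "ennreal (1/552960 * (L / U) * tau n p X p0 * real r)
      \<le> ennreal (L / (72 * a) * phi_min n p X p0 * C\<^sup>2 * (p0 / 40))"
    using phi a_pos L_pos L_le_U by (intro ennreal_leI) (simp add: C tau_def field_simps)
  also have "\<dots> \<le> (INF \<theta>h\<in>estimators n. SUP \<beta>\<in>B_set n p X \<Theta> p0. risk n p X \<mu> a b b1 c \<theta>h \<beta>)"
    by (rule minimax_risk_ge_cube[OF H(1-3) _ C(1) in_B V diam phi(1) _ _ _ exponent])
      (use p0 in auto)
  finally show ?thesis .
qed

end

theorem theorem2: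
  shows "\<exists>ct C2::real. 0 < ct \<and> ct < 1 \<and> 0 < C2 \<and>
    (\<forall>(n::nat) (p::nat) (X::nat \<Rightarrow> nat \<Rightarrow> real) (r::nat) (\<Theta>::real set) (\<mu>::real measure)
       (a::real) (b::real \<Rightarrow> real) (b1::real \<Rightarrow> real) (b2::real \<Rightarrow> real)
       (c::real \<Rightarrow> real \<Rightarrow> real) (L::real) (U::real) (p0::nat).
      r = col_rank n p X \<longrightarrow>
      (\<forall>J. J \<subseteq> {..<p} \<and> card J = r \<longrightarrow> cols_indep n X J) \<longrightarrow>
      sets \<mu> = sets borel \<longrightarrow>
      (\<lambda>y. c y a) \<in> borel_measurable borel \<longrightarrow>
      (\<forall>\<theta>. prob_space (density \<mu> (\<lambda>y. ennreal (glm_density a b c \<theta> y)))) \<longrightarrow>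
      is_interval \<Theta> \<longrightarrow> closed \<Theta> \<longrightarrow>
      (\<forall>t. (b has_real_derivative b1 t) (at t)) \<longrightarrow>
      (\<forall>t. (b1 has_real_derivative b2 t) (at t)) \<longrightarrow>
      (\<forall>t. b2 t \<le> U) \<longrightarrow> (\<forall>t\<in>\<Theta>. L \<le> b2 t) \<longrightarrow>
      0 < L \<longrightarrow> L \<le> U \<longrightarrow> 0 < a \<longrightarrow>
      1 \<le> p0 \<longrightarrow> p0 \<le> r \<longrightarrow>
      ((2 * p0 \<le> r \<longrightarrow>
         Btilde1 p (sqrt (1/16 * ct * (a / U) * inverse (phi_max n p X (2 * p0))
                          * ln (real p * exp 1 / real p0))) p0 \<subseteq> B_set n p X \<Theta> p0 \<longrightarrow>
         (INF \<theta>h\<in>estimators n. SUP \<beta>\<in>B_set n p X \<Theta> p0. risk n p X \<mu> a b b1 c \<theta>h \<beta>)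
           \<ge> ennreal (C2 * (L / U) * tau n p X (2 * p0) * real p0 * ln (real p * exp 1 / real p0)))
     \<and> (r \<le> 2 * p0 \<longrightarrow>
         Btilde2 p (sqrt (ln 2 / 64 * (a / U) * inverse (phi_max n p X p0))) p0
           \<subseteq> B_set n p X \<Theta> p0 \<longrightarrow>
         (INF \<theta>h\<in>estimators n. SUP \<beta>\<in>B_set n p X \<Theta> p0. risk n p X \<mu> a b b1 c \<theta>h \<beta>)
           \<ge> ennreal (C2 * (L / U) * tau n p X p0 * real r))))"
  apply (rule exI[of _ "1/2"], rule exI[of _ "1/552960"], intro conjI allI impI)
  subgoal by simp
  subgoal by simp
  subgoal by simp
  subgoal premises prems for n p X r \<Theta> \<mu> a b b1 b2 c L U p0
  proof -
    interpret glm \<Theta> \<mu> a b b1 b2 c L U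
      using prems(3-14) by (intro glm.intro) simp_all
    show ?thesis
      using prems(1,15-18) col_rank_le[of n p X] by (intro minimax_risk_ge_sparse) auto
  qed
  subgoal premises prems for n p X r \<Theta> \<mu> a b b1 b2 c L U p0
  proof -
    interpret glm \<Theta> \<mu> a b b1 b2 c L U
      using prems(3-14) by (intro glm.intro) simp_all
    show ?thesis
      using prems(1,15-18) col_rank_le[of n p X] by (intro minimax_risk_ge_dense) auto
  qed
  done

end
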